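(* In the setting described in the context, choose an initial point $x_0$ and confidence $0<\rho<1$, and let the accuracy $\epsilon>0$ and iteration counter $k$ be chosen in one of the following two ways: (i) $\epsilon<F(x_0)-F^*$ and $$k\geq\frac{2n\max\{\mathcal{R}_L^2(x_0),F(x_0)-F^*\}}{\epsilon}\left(1+\log\frac1\rho\right)+2-\frac{2n\max\{\mathcal{R}_L^2(x_0),F(x_0)-F^*\}}{F(x_0)-F^*};$$ (ii) $\epsilon<\min\{\mathcal{R}_L^2(x_0),F(x_0)-F^*\}$ and $$k\geq\frac{2n\mathcal{R}_L^2(x_0)}{\epsilon}\log\frac{F(x_0)-F^*}{\epsilon\rho}.$$ If $x_k$ is the random point generated by UCDC$(x_0)$ applied to $F$, then $\mathbf{P}(F(x_k)-F^*\leq\epsilon)\geq1-\rho$.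
   Context: Let $U\in\mathbf{R}^{N\times N}$ be a column permutation of the $N\times N$ identity matrix, partitioned as $U=[U_1,\dots,U_n]$ with $U_i\in\mathbf{R}^{N\times N_i}$, $\sum_iN_i=N$. For $x\in\mathbf{R}^N$ write $x^{(i)}=U_i^Tx$. Each $\mathbf{R}^{N_i}$ carries the norm $\|t\|_{(i)}=\langle B_it,t\rangle^{1/2}$ and dual norm $\|t\|_{(i)}^*=\langle B_i^{-1}t,t\rangle^{1/2}$ with $B_i$ positive definite. Consider minimizing $F(x)=f(x)+\Psi(x)$ over $\mathbf{R}^N$, where $f$ is convex and differentiable with $\|\nabla_if(x+U_it)-\nabla_if(x)\|_{(i)}^*\leq L_i\|t\|_{(i)}$ for all $x\in\mathbf{R}^N,t\in\mathbf{R}^{N_i}$, $i$ (constants $L_i>0$, $\nabla_if(x)=U_i^T\nabla f(x)$), and $\Psi(x)=\sum_i\Psi_i(x^{(i)})$ with each $\Psi_i$ proper closed convex. The problem has a minimizer; $F^*$ is the optimal value and $X^*$ the set of minimizers. Let $\|x\|_L=(\sum_iL_i\|x^{(i)}\|_{(i)}^2)^{1/2}$ and $\mathcal{R}_L(x)=\max_y\max_{x^*\in X^*}\{\|y-x^*\|_L: F(y)\leq F(x)\}$; $\mathcal{R}_L^2(x)$ denotes its square. Algorithm UCDC$(x_0)$: for $k=0,1,2,\dots$, choose $i\in\{1,\dots,n\}$ uniformly at random (independently), compute $T^{(i)}(x_k)=\arg\min_{t\in\mathbf{R}^{N_i}}\{\langle\nabla_if(x_k),t\rangle+\frac{L_i}{2}\|t\|_{(i)}^2+\Psi_i(x_k^{(i)}+t)\}$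 and set $x_{k+1}=x_k+U_iT^{(i)}(x_k)$. *)

theory Defs
  imports "HOL-Analysis.Analysis" "HOL-Probability.Probability"
begin

text \<open>The block structure U = [U_1,...,U_n] (a column permutation of the identity) is
  encoded by a map blk assigning each coordinate its block; blocks are numbered
  0..n-1. A vector of R^{N_i} is identified with U_i t, i.e. a vector of R^N
  supported on block i.\<close>

definition blockspace :: "('N::finite \<Rightarrow> nat) \<Rightarrow> nat \<Rightarrow> (real^'N) set" where
  "blockspace blk i = {t. \<forall>j. blk j \<noteq> i \<longrightarrow> t $ j = 0}"

text \<open>bproj blk i x = U_i U_i^T x, i.e. x^(i) embedded back into R^N.\<close>
definition bproj :: "('N::finite \<Rightarrow> nat) \<Rightarrow> nat \<Rightarrow> real^'N \<Rightarrow> real^'N" where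
  "bproj blk i x = (\<chi> j. if blk j = i then x $ j else 0)"

text \<open>Block norm ||t||_(i) = <B_i t, t>^(1/2); B i is an N x N matrix of which only the
  block-i principal submatrix matters.\<close>
definition bnorm :: "('N::finite \<Rightarrow> nat) \<Rightarrow> (nat \<Rightarrow> real^'N^'N) \<Rightarrow> nat \<Rightarrow> real^'N \<Rightarrow> real" where
  "bnorm blk B i t = sqrt (bproj blk i t \<bullet> (B i *v bproj blk i t))"

text \<open>B_i^{-1} s, the unique block-i vector u with B_i u = s (on block i).\<close>
definition binv :: "('N::finite \<Rightarrow> nat) \<Rightarrow> (nat \<Rightarrow> real^'N^'N) \<Rightarrow> nat \<Rightarrow> real^'N \<Rightarrow> real^'N" where
  "binv blk B i s = (THE u. u \<in> blockspace blk i \<and> bproj blk i (B i *v u) = bproj blk i s)"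

definition bdual :: "('N::finite \<Rightarrow> nat) \<Rightarrow> (nat \<Rightarrow> real^'N^'N) \<Rightarrow> nat \<Rightarrow> real^'N \<Rightarrow> real" where
  "bdual blk B i s = sqrt (bproj blk i s \<bullet> binv blk B i s)"

definition normL :: "('N::finite \<Rightarrow> nat) \<Rightarrow> (nat \<Rightarrow> real^'N^'N) \<Rightarrow> (nat \<Rightarrow> real) \<Rightarrow> nat \<Rightarrow> real^'N \<Rightarrow> real" where
  "normL blk B L n x = sqrt (\<Sum>i<n. L i * (bnorm blk B i x)\<^sup>2)"

definition Psi_tot :: "('N::finite \<Rightarrow> nat) \<Rightarrow> (nat \<Rightarrow> real^'N \<Rightarrow> ereal) \<Rightarrow> nat \<Rightarrow> real^'N \<Rightarrow> ereal" where
  "Psi_tot blk Psi n x = (\<Sum>i<n. Psi i (bproj blk i x))"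

definition Fobj :: "(real^'N \<Rightarrow> real) \<Rightarrow> ('N::finite \<Rightarrow> nat) \<Rightarrow> (nat \<Rightarrow> real^'N \<Rightarrow> ereal) \<Rightarrow> nat \<Rightarrow> real^'N \<Rightarrow> ereal" where
  "Fobj f blk Psi n x = ereal (f x) + Psi_tot blk Psi n x"

text \<open>T^(i)(x) (embedded in R^N); g is the gradient of f.\<close>
definition Tstep :: "('N::finite \<Rightarrow> nat) \<Rightarrow> (nat \<Rightarrow> real^'N^'N) \<Rightarrow> (nat \<Rightarrow> real) \<Rightarrow> (real^'N \<Rightarrow> real^'N)
     \<Rightarrow> (nat \<Rightarrow> real^'N \<Rightarrow> ereal) \<Rightarrow> nat \<Rightarrow> real^'N \<Rightarrow> real^'N" where
  "Tstep blk B L g Psi i x =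
     (let obj = (\<lambda>t. ereal (bproj blk i (g x) \<bullet> t + L i / 2 * (bnorm blk B i t)\<^sup>2)
                      + Psi i (bproj blk i x + t))
      in SOME t. t \<in> blockspace blk i \<and> (\<forall>s \<in> blockspace blk i. obj t \<le> obj s))"

text \<open>Iterates of UCDC(x0) along a sequence of chosen block indices om 0, om 1, ...\<close>
primrec ucdc :: "('N::finite \<Rightarrow> nat) \<Rightarrow> (nat \<Rightarrow> real^'N^'N) \<Rightarrow> (nat \<Rightarrow> real) \<Rightarrow> (real^'N \<Rightarrow> real^'N)
     \<Rightarrow> (nat \<Rightarrow> real^'N \<Rightarrow> ereal) \<Rightarrow> real^'N \<Rightarrow> (nat \<Rightarrow> nat) \<Rightarrow> nat \<Rightarrow> real^'N" where
  "ucdc blk B L g Psi x0 om 0 = x0"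
| "ucdc blk B L g Psi x0 om (Suc k) =
     (let x = ucdc blk B L g Psi x0 om k in x + Tstep blk B L g Psi (om k) x)"

end

theory Submission
  imports Defs
begin

text \<open>A UCDC step in block \<open>i\<close> decreases \<open>F\<close> at least as much as moving block \<open>i\<close> a fraction \<open>a\<close>
  of the way towards a minimizer \<open>x\<^sup>*\<close> would. Averaging over the uniformly random block and using
  the convexity of \<open>f\<close> and of the \<open>\<Psi>\<^sub>i\<close>, the gap \<open>\<xi> = F x - F\<^sup>*\<close> satisfies, in conditional
  expectation, \<open>\<xi>' \<le> \<xi> - a \<xi> / n + a\<^sup>2 R\<^sup>2 / (2 n)\<close> for every \<open>a \<in> [0, 1]\<close>. A suitable \<open>a\<close> gives the
  quadratic decrease \<open>\<xi>' \<le> \<xi> - \<xi>\<^sup>2 / c\<close> and, as long as \<open>\<xi> \<ge> \<epsilon>\<close>, the contraction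
  \<open>\<xi>' \<le> (1 - \<epsilon> / c) \<xi>\<close>. After truncating \<open>\<xi>\<close> to \<open>0\<close> below \<open>\<epsilon>\<close>, both recursions hold for its
  expectation, which is thus driven below \<open>\<epsilon> \<rho>\<close> after \<open>k\<close> steps; Markov's inequality for the
  truncated variable gives the claimed probability.\<close>

section \<open>Uniformly random block sequences\<close>

definition index_seqs :: "nat \<Rightarrow> nat \<Rightarrow> (nat \<Rightarrow> nat) set" where
  "index_seqs n k = PiE_dflt {..<k} 0 (\<lambda>_. {..<n})"

lemma finite_index_seqs: "finite (index_seqs n k)"
  unfolding index_seqs_def by (rule finite_PiE_dflt) auto

lemma card_index_seqs: "card (index_seqs n k) = n ^ k"
  unfolding index_seqs_def by (subst card_PiE_dflt) auto

lemma index_seqs_less: "om \<in> index_seqs n k \<Longrightarrow> j < k \<Longrightarrow> om j < n"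
  unfolding index_seqs_def PiE_dflt_def by auto

lemma index_seqs_0: "index_seqs n 0 = {\<lambda>_. 0}"
  unfolding index_seqs_def PiE_dflt_def by auto

lemma index_seqs_Suc:
  "index_seqs n (Suc k) = (\<lambda>(om, i). om(k := i)) ` (index_seqs n k \<times> {..<n})"
proof (intro set_eqI iffI)
  fix om assume om: "om \<in> index_seqs n (Suc k)"
  then have "(om(k := 0), om k) \<in> index_seqs n k \<times> {..<n}"
    unfolding index_seqs_def PiE_dflt_def by auto
  then show "om \<in> (\<lambda>(om, i). om(k := i)) ` (index_seqs n k \<times> {..<n})"
    by (rule rev_image_eqI) simp
qed (auto simp: index_seqs_def PiE_dflt_def)

lemma inj_on_index_seqs_extend: "inj_on (\<lambda>(om, i). om(k := i)) (index_seqs n k \<times> {..<n})"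
proof (rule inj_onI, clarify)
  fix om i om' i' assume om: "om \<in> index_seqs n k" "om' \<in> index_seqs n k"
    and eq: "om(k := i) = om'(k := i')"
  have "om j = om' j" for j
    using om fun_cong[OF eq, of j] by (cases "j = k") (auto simp: index_seqs_def PiE_dflt_def)
  then show "om = om' \<and> i = i'" using fun_cong[OF eq, of k] by auto
qed

lemma prob_uniform_index_seqs:
  assumes "0 < n"
  shows "measure_pmf.prob (Pi_pmf {..<k} (0::nat) (\<lambda>_. pmf_of_set {..<n})) X
           = card (X \<inter> index_seqs n k) / real n ^ k"
proof -
  let ?p = "Pi_pmf {..<k} (0::nat) (\<lambda>_. pmf_of_set {..<n})"
  have uniform: "pmf (pmf_of_set {..<n}) j = 1 / real n" if "j < n" for j
    using assms that by (subst pmf_of_set) auto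
  have "set_pmf (pmf_of_set {..<n}) = {..<n}" using assms by (intro set_pmf_of_set) auto
  then have support: "set_pmf ?p = index_seqs n k"
    unfolding index_seqs_def by (subst set_Pi_pmf) (auto simp: comp_def)
  have pmf_p: "pmf ?p om = 1 / real n ^ k" if "om \<in> index_seqs n k" for om
  proof -
    have "pmf ?p om = (\<Prod>j<k. pmf (pmf_of_set {..<n}) (om j))"
      using that by (intro pmf_Pi') (auto simp: index_seqs_def PiE_dflt_def)
    also have "\<dots> = (\<Prod>j<k. 1 / real n)"
      by (intro prod.cong) (auto simp: uniform index_seqs_less[OF that])
    finally show ?thesis by (simp add: power_one_over)
  qed
  have "measure_pmf.prob ?p X = measure_pmf.prob ?p (X \<inter> set_pmf ?p)"
    by (simp add: measure_Int_set_pmf)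
  also have "\<dots> = (\<Sum>om\<in>X \<inter> index_seqs n k. pmf ?p om)"
    using support by (simp add: measure_measure_pmf_finite finite_index_seqs)
  also have "\<dots> = (\<Sum>om\<in>X \<inter> index_seqs n k. 1 / real n ^ k)"
    by (rule sum.cong) (auto simp: pmf_p)
  finally show ?thesis by simp
qed

primrec iterate_along :: "(nat \<Rightarrow> 'a \<Rightarrow> 'a) \<Rightarrow> 'a \<Rightarrow> (nat \<Rightarrow> nat) \<Rightarrow> nat \<Rightarrow> 'a" where
  "iterate_along step x0 om 0 = x0"
| "iterate_along step x0 om (Suc k) = step (om k) (iterate_along step x0 om k)"

lemma iterate_along_fun_upd [simp]:
  "iterate_along step x0 (om(k := i)) k = iterate_along step x0 om k"
proof -
  have "j \<le> k \<Longrightarrow> iterate_along step x0 (om(k := i)) j = iterate_along step x0 om j" for j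
    by (induction j) auto
  then show ?thesis by simp
qed

lemma iterate_along_invariant:
  assumes "P x0" "\<And>x i. P x \<Longrightarrow> i < n \<Longrightarrow> P (step i x)" "om \<in> index_seqs n k"
  shows "P (iterate_along step x0 om k)"
proof -
  have "j \<le> k \<Longrightarrow> P (iterate_along step x0 om j)" for j
    using assms index_seqs_less[OF assms(3)] by (induction j) auto
  then show ?thesis by simp
qed

lemma sum_index_seqs_Suc:
  "(\<Sum>om\<in>index_seqs n (Suc k). \<phi> (iterate_along step x0 om (Suc k)))
     = (\<Sum>om\<in>index_seqs n k. \<Sum>i<n. \<phi> (step i (iterate_along step x0 om k)))"
proof -
  have "(\<Sum>om\<in>index_seqs n (Suc k). \<phi> (iterate_along step x0 om (Suc k)))
      = (\<Sum>(om, i)\<in>index_seqs n k \<times> {..<n}. \<phi> (iterate_along step x0 (om(k := i)) (Suc k)))"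
    unfolding index_seqs_Suc
    by (subst sum.reindex[OF inj_on_index_seqs_extend]) (simp add: comp_def case_prod_beta)
  also have "\<dots> = (\<Sum>om\<in>index_seqs n k. \<Sum>i<n. \<phi> (step i (iterate_along step x0 om k)))"
    by (simp add: sum.cartesian_product)
  finally show ?thesis .
qed

section \<open>Two scalar recursions\<close>

lemma one_minus_power_le_exp:
  fixes q :: real
  assumes "0 \<le> q" "q \<le> 1"
  shows "(1 - q) ^ j \<le> exp (- (q * real j))"
proof -
  have "(1 - q) ^ j \<le> exp (- q) ^ j"
    using assms exp_ge_add_one_self[of "-q"] by (intro power_mono) auto
  also have "\<dots> = exp (- (q * real j))" by (simp add: exp_of_nat_mult[symmetric] mult.commute)
  finally show ?thesis .
qed

lemma geometric_decrease_le:
  fixes th :: "nat \<Rightarrow> real"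
  assumes "\<And>j. th (Suc j) \<le> th j * q" "0 \<le> q"
  shows "th (m + j) \<le> th m * q ^ j"
proof (induction j)
  case (Suc j)
  have "th (m + Suc j) \<le> th (m + j) * q" using assms(1)[of "m + j"] by simp
  also have "\<dots> \<le> th m * q ^ j * q" using Suc assms(2) by (rule mult_right_mono)
  finally show ?case by (simp add: ac_simps)
qed simp

lemma quadratic_decrease_le_recip:
  fixes th :: "nat \<Rightarrow> real"
  assumes th0: "th 0 = D" and D: "0 < D" and cD: "2 * D \<le> c"
    and step: "\<And>j. th (Suc j) \<le> th j - (th j)\<^sup>2 / c"
  shows "th j \<le> c / (real j + c / D)"
proof (induction j)
  case 0
  then show ?case using th0 D cD by simp
next
  case (Suc j)
  have c: "0 < c" using D cD by linarith
  define s where "s = real j + c / D"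
  have s: "0 < s" using c D unfolding s_def by (intro add_nonneg_pos) auto
  define b where "b = c / s"
  have "c / s \<le> c / (c / D)" using c D s by (intro divide_left_mono) (auto simp: s_def)
  then have bD: "b \<le> D" using c D by (simp add: b_def)
  have thb: "th j \<le> b" using Suc by (simp add: b_def s_def)
  \<comment> \<open>\<open>u \<mapsto> u - u\<^sup>2 / c\<close> is increasing for \<open>u \<le> c / 2\<close>\<close>
  have "b - b\<^sup>2 / c - (th j - (th j)\<^sup>2 / c) = (b - th j) * (1 - (b + th j) / c)"
    using c by (simp add: field_simps power2_eq_square)
  also have "\<dots> \<ge> 0"
    using thb bD cD c by (intro mult_nonneg_nonneg) (auto simp: field_simps)
  finally have "th (Suc j) \<le> b - b\<^sup>2 / c" using step[of j] by linarith
  also have "b - b\<^sup>2 / c = c * (s - 1) / s\<^sup>2"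
    using s c by (simp add: b_def field_simps power2_eq_square)
  also have "\<dots> \<le> c / (s + 1)"
  proof -
    have "c * ((s - 1) * (s + 1)) \<le> c * s\<^sup>2"
      using c by (intro mult_left_mono) (auto simp: algebra_simps power2_eq_square)
    then show ?thesis using c s by (simp add: field_simps power2_eq_square)
  qed
  also have "s + 1 = real (Suc j) + c / D" by (simp add: s_def)
  finally show ?case .
qed

lemma le_eps_rho_of_quadratic_decrease:
  fixes th :: "nat \<Rightarrow> real"
  assumes th0: "th 0 = D" and D: "0 < D" and cD: "2 * D \<le> c"
    and quadratic: "\<And>j. th (Suc j) \<le> th j - (th j)\<^sup>2 / c"
    and linear: "\<And>j. th (Suc j) \<le> th j * (1 - eps / c)"
    and eps: "0 < eps" "eps < D" and rho: "0 < rho" "rho < 1"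
    and k: "real k \<ge> c / eps * (1 + ln (1 / rho)) + 2 - c / D"
  shows "th k \<le> eps * rho"
proof -
  have c: "0 < c" using D cD by linarith
  define q where "q = eps / c"
  have q: "0 \<le> q" "q \<le> 1" using eps cD c by (auto simp: q_def field_simps)
  \<comment> \<open>after \<open>k1\<close> steps the quadratic regime has brought \<open>th\<close> below \<open>eps\<close>\<close>
  define k1 where "k1 = nat \<lceil>c / eps - c / D\<rceil>"
  have ce: "c / D < c / eps" using eps c by (intro divide_strict_left_mono) auto
  have k1: "c / eps - c / D \<le> real k1" "real k1 \<le> c / eps - c / D + 1"
    unfolding k1_def using ce by linarith+
  have "th k1 \<le> c / (real k1 + c / D)"
    by (rule quadratic_decrease_le_recip[OF th0 D cD quadratic])
  also have "\<dots> \<le> c / (c / eps)"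
    using k1(1) divide_pos_pos[OF c D] divide_pos_pos[OF c eps(1)] c
    by (intro divide_left_mono mult_pos_pos) linarith+
  finally have th_k1: "th k1 \<le> eps" using c by simp
  have "c / eps \<le> c / eps * (1 + ln (1 / rho))" using rho c eps by (simp add: field_simps)
  then have "k1 \<le> k" using k k1(2) by linarith
  then obtain j where kj: "k = k1 + j" using le_Suc_ex by blast
  have j: "c / eps * ln (1 / rho) \<le> real j" using k k1(2) kj by (simp add: algebra_simps)
  have "th k \<le> th k1 * (1 - q) ^ j"
    unfolding kj using linear q by (intro geometric_decrease_le) (auto simp: q_def)
  also have "\<dots> \<le> eps * exp (- (q * real j))"
    using th_k1 q eps one_minus_power_le_exp[OF q] by (intro mult_mono) auto
  also have "\<dots> \<le> eps * rho"
  proof -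
    have "ln (1 / rho) \<le> q * real j"
      using mult_left_mono[OF j q(1)] c eps by (simp add: q_def)
    then have "exp (- (q * real j)) \<le> exp (- ln (1 / rho))" by simp
    then show ?thesis using eps rho by (simp add: ln_div)
  qed
  finally show ?thesis .
qed

lemma le_eps_rho_of_linear_decrease:
  fixes th :: "nat \<Rightarrow> real"
  assumes th0: "th 0 = D" and c: "0 < c"
    and linear: "\<And>j. th (Suc j) \<le> th j * (1 - eps / c)"
    and eps: "0 < eps" "eps < D" "eps \<le> c" and rho: "0 < rho" "rho < 1"
    and k: "real k \<ge> c / eps * ln (D / (eps * rho))"
  shows "th k \<le> eps * rho"
proof -
  define q where "q = eps / c"
  have q: "0 \<le> q" "q \<le> 1" using eps c by (auto simp: q_def field_simps)
  have D: "0 < D" using eps by linarith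
  have "th k \<le> D * (1 - q) ^ k"
    using geometric_decrease_le[of th "1 - q" 0 k] linear q th0 by (simp add: q_def)
  also have "\<dots> \<le> D * exp (- (q * real k))"
    using D by (intro mult_left_mono one_minus_power_le_exp q) auto
  also have "\<dots> \<le> eps * rho"
  proof -
    have "ln (D / (eps * rho)) \<le> q * real k"
      using mult_left_mono[OF k q(1)] c eps by (simp add: q_def)
    then have "exp (- (q * real k)) \<le> exp (- ln (D / (eps * rho)))" by simp
    also have "\<dots> = eps * rho / D" using rho eps D by (simp add: ln_div exp_diff exp_minus)
    finally show ?thesis using D by (simp add: field_simps)
  qed
  finally show ?thesis .
qed

section \<open>Randomized descent with high probability\<close>

text \<open>\<open>step i\<close> updates block \<open>i\<close>, drawn uniformly among \<open>n\<close>; \<open>xi\<close> is the optimality gap, and on average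
  a step is at least as good as moving a fraction \<open>a\<close> of the way towards an optimum at squared
  distance at most \<open>R2\<close>.\<close>

locale expected_descent =
  fixes n :: nat and step :: "nat \<Rightarrow> 'a \<Rightarrow> 'a" and P :: "'a \<Rightarrow> bool"
    and xi :: "'a \<Rightarrow> real" and x0 :: 'a and R2 :: real
  assumes n_pos: "0 < n"
    and P_init: "P x0"
    and P_step: "P x \<Longrightarrow> i < n \<Longrightarrow> P (step i x)"
    and xi_nonneg: "P x \<Longrightarrow> 0 \<le> xi x"
    and xi_le_init: "P x \<Longrightarrow> xi x \<le> xi x0"
    and xi_step_le: "P x \<Longrightarrow> i < n \<Longrightarrow> xi (step i x) \<le> xi x"
    and sum_xi_step_le: "P x \<Longrightarrow> 0 \<le> a \<Longrightarrow> a \<le> 1 \<Longrightarrow>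
           (\<Sum>i<n. xi (step i x)) \<le> real n * xi x - a * xi x + a\<^sup>2 * R2 / 2"
begin

abbreviation iterate :: "(nat \<Rightarrow> nat) \<Rightarrow> nat \<Rightarrow> 'a" where
  "iterate \<equiv> iterate_along step x0"

lemma P_iterate: "om \<in> index_seqs n k \<Longrightarrow> P (iterate om k)"
  using P_init P_step by (rule iterate_along_invariant)

text \<open>Once \<open>xi\<close> has dropped below \<open>eps\<close> it stays there, so truncating it at \<open>eps\<close> does not
  change the event of interest, but makes its mean contract quadratically.\<close>

definition trunc :: "real \<Rightarrow> 'a \<Rightarrow> real" where
  "trunc eps x = (if eps \<le> xi x then xi x else 0)"

definition mean_trunc :: "real \<Rightarrow> nat \<Rightarrow> real" where
  "mean_trunc eps k = (\<Sum>om\<in>index_seqs n k. trunc eps (iterate om k)) / real n ^ k"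

lemma mean_trunc_0: "eps \<le> xi x0 \<Longrightarrow> mean_trunc eps 0 = xi x0"
  by (simp add: mean_trunc_def index_seqs_0 trunc_def)

lemma mean_trunc_Suc_le:
  assumes "\<And>x. P x \<Longrightarrow> (\<Sum>i<n. trunc eps (step i x)) \<le> real n * G (trunc eps x)"
  shows "mean_trunc eps (Suc k) \<le> (\<Sum>om\<in>index_seqs n k. G (trunc eps (iterate om k))) / real n ^ k"
proof -
  have "mean_trunc eps (Suc k)
      = (\<Sum>om\<in>index_seqs n k. \<Sum>i<n. trunc eps (step i (iterate om k))) / real n ^ Suc k"
    unfolding mean_trunc_def sum_index_seqs_Suc ..
  also have "\<dots> \<le> (\<Sum>om\<in>index_seqs n k. real n * G (trunc eps (iterate om k))) / real n ^ Suc k"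
    using n_pos by (intro divide_right_mono sum_mono assms P_iterate) auto
  also have "\<dots> = (\<Sum>om\<in>index_seqs n k. G (trunc eps (iterate om k))) / real n ^ k"
    using n_pos by (simp add: sum_distrib_left[symmetric])
  finally show ?thesis .
qed

lemma mean_trunc_Suc_le_linear:
  assumes "\<And>x. P x \<Longrightarrow> (\<Sum>i<n. trunc eps (step i x)) \<le> real n * (trunc eps x * q)"
  shows "mean_trunc eps (Suc k) \<le> mean_trunc eps k * q"
  using mean_trunc_Suc_le[OF assms] by (simp add: mean_trunc_def sum_distrib_right[symmetric])

lemma mean_trunc_Suc_le_quadratic:
  assumes "0 < c"
    and "\<And>x. P x \<Longrightarrow> (\<Sum>i<n. trunc eps (step i x)) \<le> real n * (trunc eps x - (trunc eps x)\<^sup>2 / c)"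
  shows "mean_trunc eps (Suc k) \<le> mean_trunc eps k - (mean_trunc eps k)\<^sup>2 / c"
proof -
  define N where "N = real n ^ k"
  have N: "0 < N" using n_pos by (simp add: N_def)
  let ?z = "\<lambda>om. trunc eps (iterate om k)"
  have "(\<Sum>om\<in>index_seqs n k. ?z om)\<^sup>2 \<le> (\<Sum>om\<in>index_seqs n k. (?z om)\<^sup>2) * N"
    using sum_squared_le_sum_of_squares[of ?z "index_seqs n k"] by (simp add: card_index_seqs N_def)
  then have jensen: "(mean_trunc eps k)\<^sup>2 / c \<le> (\<Sum>om\<in>index_seqs n k. (?z om)\<^sup>2) / (c * N)"
    using N assms(1) by (simp add: mean_trunc_def N_def[symmetric] field_simps power2_eq_square)
  have "mean_trunc eps (Suc k) \<le> (\<Sum>om\<in>index_seqs n k. ?z om - (?z om)\<^sup>2 / c) / N"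
    unfolding N_def by (rule mean_trunc_Suc_le) (rule assms(2))
  also have "(\<Sum>om\<in>index_seqs n k. ?z om - (?z om)\<^sup>2 / c)
      = (\<Sum>om\<in>index_seqs n k. ?z om) - (\<Sum>om\<in>index_seqs n k. (?z om)\<^sup>2) / c"
    by (simp add: sum_subtractf sum_divide_distrib)
  also have "\<dots> / N = mean_trunc eps k - (\<Sum>om\<in>index_seqs n k. (?z om)\<^sup>2) / (c * N)"
    by (simp add: mean_trunc_def N_def diff_divide_distrib)
  finally show ?thesis using jensen by linarith
qed

lemma prob_le_eps_ge:
  assumes "0 < eps"
  shows "1 - mean_trunc eps k / eps
           \<le> measure_pmf.prob (Pi_pmf {..<k} 0 (\<lambda>_. pmf_of_set {..<n}))
                {om \<in> index_seqs n k. xi (iterate om k) \<le> eps}"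
proof -
  let ?G = "{om \<in> index_seqs n k. xi (iterate om k) \<le> eps}"
  define A where "A = {om \<in> index_seqs n k. eps \<le> xi (iterate om k)}"
  have N: "0 < real n ^ k" using n_pos by simp
  \<comment> \<open>Markov's inequality for the truncated variable\<close>
  have "eps * card A = (\<Sum>om\<in>A. eps)" by simp
  also have "\<dots> \<le> (\<Sum>om\<in>A. trunc eps (iterate om k))"
    by (intro sum_mono) (auto simp: A_def trunc_def)
  also have "\<dots> \<le> (\<Sum>om\<in>index_seqs n k. trunc eps (iterate om k))"
    using P_iterate xi_nonneg
    by (intro sum_mono2 finite_index_seqs) (auto simp: A_def trunc_def)
  also have "\<dots> = real n ^ k * mean_trunc eps k" using N by (simp add: mean_trunc_def)
  finally have A: "card A \<le> real n ^ k * mean_trunc eps k / eps"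
    using assms by (simp add: field_simps)
  have "index_seqs n k - A \<subseteq> ?G" by (auto simp: A_def)
  then have "card (index_seqs n k - A) \<le> card ?G" by (intro card_mono) (auto simp: finite_index_seqs)
  moreover have "card (index_seqs n k - A) = n ^ k - card A"
    by (subst card_Diff_subset) (auto simp: A_def card_index_seqs finite_index_seqs)
  ultimately have le: "n ^ k - card A \<le> card ?G" by simp
  have "card A \<le> n ^ k"
    using card_mono[OF finite_index_seqs, of A n k] by (auto simp: A_def card_index_seqs)
  then have "real n ^ k - card A = real (n ^ k - card A)" by (simp add: of_nat_diff)
  also have "\<dots> \<le> card ?G" using le by (simp only: of_nat_le_iff)
  moreover have
    "real n ^ k * (1 - mean_trunc eps k / eps) = real n ^ k - real n ^ k * mean_trunc eps k / eps"
    by (simp add: algebra_simps)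
  ultimately have "real n ^ k * (1 - mean_trunc eps k / eps) \<le> card ?G" using A by linarith
  moreover have "?G \<inter> index_seqs n k = ?G" by auto
  ultimately show ?thesis
    by (simp add: prob_uniform_index_seqs[OF n_pos] pos_le_divide_eq[OF N] mult.commute)
qed

lemma trunc_step_eq_0: "P x \<Longrightarrow> xi x < eps \<Longrightarrow> i < n \<Longrightarrow> trunc eps (step i x) = 0"
  using xi_step_le[of x i] by (simp add: trunc_def)

lemma sum_trunc_step_le:
  assumes "P x" "eps \<le> xi x" "0 \<le> a" "a \<le> 1"
  shows "(\<Sum>i<n. trunc eps (step i x)) \<le> real n * trunc eps x - a * trunc eps x + a\<^sup>2 * R2 / 2"
proof -
  have "(\<Sum>i<n. trunc eps (step i x)) \<le> (\<Sum>i<n. xi (step i x))"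
    using assms(1) xi_nonneg P_step by (intro sum_mono) (auto simp: trunc_def)
  also have "\<dots> \<le> real n * xi x - a * xi x + a\<^sup>2 * R2 / 2"
    using assms by (intro sum_xi_step_le) auto
  finally show ?thesis using assms(2) by (simp add: trunc_def)
qed

lemma sum_trunc_step_le_quadratic:
  assumes x: "P x" and D: "0 < xi x0"
  defines "c \<equiv> 2 * real n * max R2 (xi x0)"
  shows "(\<Sum>i<n. trunc eps (step i x)) \<le> real n * (trunc eps x - (trunc eps x)\<^sup>2 / c)"
proof (cases "eps \<le> xi x")
  case False
  then show ?thesis using trunc_step_eq_0[OF x] by (simp add: trunc_def)
next
  case True
  define M where "M = max R2 (xi x0)"
  define s where "s = trunc eps x"
  have M: "0 < M" "R2 \<le> M" using D by (auto simp: M_def)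
  have s: "s = xi x" "0 \<le> s" "s \<le> M"
    using True xi_nonneg[OF x] xi_le_init[OF x] by (auto simp: s_def trunc_def M_def)
  \<comment> \<open>the step length \<open>s / M \<le> 1\<close> guarantees the decrease \<open>s\<^sup>2 / (2 M)\<close>\<close>
  have "(\<Sum>i<n. trunc eps (step i x)) \<le> real n * s - (s / M) * s + (s / M)\<^sup>2 * R2 / 2"
    unfolding s_def using x True s M by (intro sum_trunc_step_le) (auto simp: s_def)
  also have "\<dots> \<le> real n * s - (s / M) * s + (s / M)\<^sup>2 * M / 2"
    using M by (intro add_left_mono divide_right_mono mult_left_mono) auto
  also have "\<dots> = real n * (s - s\<^sup>2 / c)"
    using M n_pos by (simp add: c_def M_def[symmetric] field_simps power2_eq_square)
  finally show ?thesis by (simp add: s_def)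
qed

lemma sum_trunc_step_le_linear:
  assumes x: "P x" and eps: "0 < eps" "eps \<le> R2"
  shows "(\<Sum>i<n. trunc eps (step i x)) \<le> real n * (trunc eps x * (1 - eps / (2 * real n * R2)))"
proof (cases "eps \<le> xi x")
  case False
  then show ?thesis using trunc_step_eq_0[OF x] by (simp add: trunc_def)
next
  case True
  define s where "s = trunc eps x"
  have s: "s = xi x" "eps \<le> s" using True by (auto simp: s_def trunc_def)
  have R2: "0 < R2" using eps by linarith
  have "(\<Sum>i<n. trunc eps (step i x)) \<le> real n * s - (eps / R2) * s + (eps / R2)\<^sup>2 * R2 / 2"
    unfolding s_def using x True eps R2 by (intro sum_trunc_step_le) auto
  also have "\<dots> \<le> real n * s - (eps / R2) * s + (eps / R2) * s / 2"
    using R2 eps s by (intro add_left_mono) (simp add: power2_eq_square field_simps mult_right_mono)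
  also have "\<dots> = real n * (s * (1 - eps / (2 * real n * R2)))"
    using R2 n_pos by (simp add: field_simps)
  finally show ?thesis by (simp add: s_def)
qed

theorem prob_le_eps_ge_one_minus:
  assumes rho: "0 < rho" "rho < 1" and eps: "0 < eps"
    and choice:
      "(eps < xi x0 \<and>
          real k \<ge> 2 * real n * max R2 (xi x0) / eps * (1 + ln (1 / rho)) + 2
                    - 2 * real n * max R2 (xi x0) / xi x0)
     \<or> (eps < min R2 (xi x0) \<and> real k \<ge> 2 * real n * R2 / eps * ln (xi x0 / (eps * rho)))"
  shows "1 - rho \<le> measure_pmf.prob (Pi_pmf {..<k} 0 (\<lambda>_. pmf_of_set {..<n}))
                      {om \<in> index_seqs n k. xi (iterate om k) \<le> eps}"
proof -
  have "mean_trunc eps k \<le> eps * rho"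
    using choice
  proof
    assume case_i: "eps < xi x0 \<and> real k \<ge> 2 * real n * max R2 (xi x0) / eps * (1 + ln (1 / rho)) + 2
                                          - 2 * real n * max R2 (xi x0) / xi x0"
    define c where "c = 2 * real n * max R2 (xi x0)"
    have D: "0 < xi x0" using case_i eps by linarith
    have "max R2 (xi x0) \<le> real n * max R2 (xi x0)"
      using n_pos D mult_right_mono[of 1 "real n" "max R2 (xi x0)"] by simp
    then have cD: "2 * xi x0 \<le> c" unfolding c_def by linarith
    have c: "0 < c" using D cD by linarith
    have quadratic: "\<And>x. P x \<Longrightarrow>
        (\<Sum>i<n. trunc eps (step i x)) \<le> real n * (trunc eps x - (trunc eps x)\<^sup>2 / c)"
      using sum_trunc_step_le_quadratic[OF _ D] by (simp add: c_def)
    have le_linear: "trunc eps x - (trunc eps x)\<^sup>2 / c \<le> trunc eps x * (1 - eps / c)" for x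
    proof -
      have "eps * trunc eps x \<le> (trunc eps x)\<^sup>2"
        using eps mult_right_mono[of eps "xi x" "xi x"] by (simp add: trunc_def power2_eq_square)
      then have "eps * trunc eps x / c \<le> (trunc eps x)\<^sup>2 / c"
        using c by (intro divide_right_mono) auto
      moreover have "trunc eps x * (1 - eps / c) = trunc eps x - eps * trunc eps x / c"
        by (simp add: algebra_simps)
      ultimately show ?thesis by linarith
    qed
    have linear: "(\<Sum>i<n. trunc eps (step i x)) \<le> real n * (trunc eps x * (1 - eps / c))"
      if "P x" for x
      using order_trans[OF quadratic[OF that] mult_left_mono[OF le_linear]] by simp
    show ?thesis
    proof (rule le_eps_rho_of_quadratic_decrease[where D = "xi x0" and c = c])
      show "mean_trunc eps 0 = xi x0" using case_i by (intro mean_trunc_0) simp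
      show "mean_trunc eps (Suc j) \<le> mean_trunc eps j - (mean_trunc eps j)\<^sup>2 / c" for j
        by (rule mean_trunc_Suc_le_quadratic[OF c quadratic])
      show "mean_trunc eps (Suc j) \<le> mean_trunc eps j * (1 - eps / c)" for j
        by (rule mean_trunc_Suc_le_linear[OF linear])
      show "c / eps * (1 + ln (1 / rho)) + 2 - c / xi x0 \<le> real k" using case_i by (simp add: c_def)
      show "0 < xi x0" "2 * xi x0 \<le> c" by (fact D, fact cD)
      show "0 < eps" "eps < xi x0" "0 < rho" "rho < 1" using eps case_i rho by simp_all
    qed
  next
    assume case_ii: "eps < min R2 (xi x0) \<and> real k \<ge> 2 * real n * R2 / eps * ln (xi x0 / (eps * rho))"
    define c where "c = 2 * real n * R2"
    have "R2 \<le> real n * R2" using case_ii eps n_pos mult_right_mono[of 1 "real n" R2] by simp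
    then have R2c: "R2 \<le> c" using case_ii eps unfolding c_def by linarith
    show ?thesis
    proof (rule le_eps_rho_of_linear_decrease[where D = "xi x0" and c = c])
      show "mean_trunc eps 0 = xi x0" using case_ii by (intro mean_trunc_0) simp
      show "mean_trunc eps (Suc j) \<le> mean_trunc eps j * (1 - eps / c)" for j
        unfolding c_def using case_ii eps
        by (intro mean_trunc_Suc_le_linear sum_trunc_step_le_linear) auto
      show "c / eps * ln (xi x0 / (eps * rho)) \<le> real k" using case_ii by (simp add: c_def)
      show "0 < c" "0 < eps" "eps < xi x0" "eps \<le> c" "0 < rho" "rho < 1"
        using R2c case_ii rho eps by simp_all
    qed
  qed
  then have "1 - rho \<le> 1 - mean_trunc eps k / eps" using eps by (simp add: field_simps)
  then show ?thesis using prob_le_eps_ge[OF eps, of k] by linarith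
qed

end

section \<open>Block decomposition\<close>

lemma bproj_nth: "bproj blk i x $ j = (if blk j = i then x $ j else 0)"
  by (simp add: bproj_def)

lemma bproj_add: "bproj blk i (x + y) = bproj blk i x + bproj blk i y"
  by (simp add: vec_eq_iff bproj_nth)
lemma bproj_diff: "bproj blk i (x - y) = bproj blk i x - bproj blk i y"
  by (simp add: vec_eq_iff bproj_nth)
lemma bproj_scaleR: "bproj blk i (r *\<^sub>R x) = r *\<^sub>R bproj blk i x"
  by (simp add: vec_eq_iff bproj_nth)
lemma bproj_zero[simp]: "bproj blk i 0 = 0"
  by (simp add: vec_eq_iff bproj_nth)
lemma bproj_in: "bproj blk i x \<in> blockspace blk i"
  by (simp add: blockspace_def bproj_nth)
lemma bproj_id: "t \<in> blockspace blk i \<Longrightarrow> bproj blk i t = t"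
  by (auto simp: vec_eq_iff bproj_nth blockspace_def)
lemma bproj_bproj[simp]: "bproj blk i (bproj blk i x) = bproj blk i x"
  by (rule bproj_id[OF bproj_in])
lemma bproj_other: "i \<noteq> j \<Longrightarrow> t \<in> blockspace blk j \<Longrightarrow> bproj blk i t = 0"
  by (auto simp: vec_eq_iff bproj_nth blockspace_def)
lemma linear_bproj: "linear (bproj blk i)"
  by (rule linearI) (simp_all add: bproj_add bproj_scaleR)

lemma inner_bproj: "t \<in> blockspace blk i \<Longrightarrow> s \<bullet> t = bproj blk i s \<bullet> t"
  unfolding inner_vec_def by (intro sum.cong) (auto simp: bproj_nth blockspace_def)

lemma sum_bproj: "\<forall>j. blk j < n \<Longrightarrow> (\<Sum>i<n. bproj blk i x) = x"
proof -
  assume b: "\<forall>j. blk j < n"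
  show ?thesis
  proof (subst vec_eq_iff, intro allI)
    fix j
    have "(\<Sum>i<n. bproj blk i x) $ j = (\<Sum>i<n. bproj blk i x $ j)" by (simp add: sum_component)
    also have "\<dots> = (\<Sum>i<n. if blk j = i then x $ j else 0)" by (simp add: bproj_nth)
    also have "\<dots> = x $ j"
      using b by (simp add: sum.delta[of "{..<n}" "blk j" "\<lambda>_. x $ j", simplified] eq_commute)
    finally show "(\<Sum>i<n. bproj blk i x) $ j = x $ j" .
  qed
qed

lemma blockspace_add: "s \<in> blockspace blk i \<Longrightarrow> t \<in> blockspace blk i \<Longrightarrow> s + t \<in> blockspace blk i"
  by (simp add: blockspace_def)
lemma blockspace_diff: "s \<in> blockspace blk i \<Longrightarrow> t \<in> blockspace blk i \<Longrightarrow> s - t \<in> blockspace blk i"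
  by (simp add: blockspace_def)
lemma blockspace_scaleR: "t \<in> blockspace blk i \<Longrightarrow> r *\<^sub>R t \<in> blockspace blk i"
  by (simp add: blockspace_def)
lemma blockspace_zero[simp]: "0 \<in> blockspace blk i"
  by (simp add: blockspace_def)

lemma subspace_blockspace: "subspace (blockspace blk i)"
  unfolding subspace_def by (simp add: blockspace_add blockspace_scaleR)

lemma closed_blockspace: "closed (blockspace blk i)"
  by (rule closed_subspace[OF subspace_blockspace])

definition bquad :: "('N::finite \<Rightarrow> nat) \<Rightarrow> (nat \<Rightarrow> real^'N^'N) \<Rightarrow> nat \<Rightarrow> real^'N \<Rightarrow> real" where
  "bquad blk B i t = bproj blk i t \<bullet> (B i *v bproj blk i t)"

lemma bquad_scaleR: "bquad blk B i (r *\<^sub>R t) = r\<^sup>2 * bquad blk B i t"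
  by (simp add: bquad_def bproj_scaleR matrix_vector_mult_scaleR power2_eq_square)

lemma bquad_minus: "bquad blk B i (- t) = bquad blk B i t"
  using bquad_scaleR[of blk B i "-1" t] by simp

lemma bnorm_eq_sqrt_bquad: "bnorm blk B i t = sqrt (bquad blk B i t)"
  by (simp add: bnorm_def bquad_def)

lemma continuous_on_bquad: "continuous_on UNIV (bquad blk B i)"
proof -
  have c: "continuous_on UNIV (bproj blk i)"
    by (rule linear_continuous_on) (simp add: linear_conv_bounded_linear[symmetric] linear_bproj)
  have l2: "linear (\<lambda>t. B i *v bproj blk i t)"
    using linear_compose[OF linear_bproj matrix_vector_mul_linear] by (simp add: o_def)
  have c2: "continuous_on UNIV (\<lambda>t. B i *v bproj blk i t)"
    by (rule linear_continuous_on) (simp add: linear_conv_bounded_linear[symmetric] l2)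
  show ?thesis unfolding bquad_def by (intro continuous_on_inner c c2)
qed

locale block_forms =
  fixes blk :: "'N::finite \<Rightarrow> nat" and n :: nat and B :: "nat \<Rightarrow> real^'N^'N"
  assumes B_sym: "\<forall>i<n. \<forall>j l. blk j = i \<and> blk l = i \<longrightarrow> B i $ j $ l = B i $ l $ j"
    and B_pd: "\<forall>i<n. \<forall>t \<in> blockspace blk i. t \<noteq> 0 \<longrightarrow> t \<bullet> (B i *v t) > 0"
begin

abbreviation V where "V i \<equiv> blockspace blk i"

lemma block_form_sym:
  assumes i: "i < n" and u: "u \<in> V i" and v: "v \<in> V i"
  shows "u \<bullet> (B i *v v) = v \<bullet> (B i *v u)"
proof -
  have "u \<bullet> (B i *v v) = (\<Sum>j\<in>UNIV. \<Sum>l\<in>UNIV. u$j * B i$j$l * v$l)"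
    by (simp add: inner_vec_def matrix_vector_mult_def sum_distrib_left mult.assoc)
  also have "\<dots> = (\<Sum>j\<in>UNIV. \<Sum>l\<in>UNIV. v$l * B i$l$j * u$j)"
  proof (intro sum.cong refl)
    fix j l
    show "u$j * B i$j$l * v$l = v$l * B i$l$j * u$j"
    proof (cases "u$j = 0 \<or> v$l = 0")
      case True then show ?thesis by auto
    next
      case False
      then have "blk j = i" "blk l = i" using u v by (auto simp: blockspace_def)
      then have "B i$j$l = B i$l$j" using B_sym i by auto
      then show ?thesis by simp
    qed
  qed
  also have "\<dots> = (\<Sum>l\<in>UNIV. \<Sum>j\<in>UNIV. v$l * B i$l$j * u$j)" by (rule sum.swap)
  also have "\<dots> = v \<bullet> (B i *v u)"
    by (simp add: inner_vec_def matrix_vector_mult_def sum_distrib_left mult.assoc)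
  finally show ?thesis .
qed

lemma block_form_nonneg: "i < n \<Longrightarrow> t \<in> V i \<Longrightarrow> 0 \<le> t \<bullet> (B i *v t)"
  using B_pd by (cases "t = 0") (auto simp: less_imp_le)

lemma bquad_nonneg: "i < n \<Longrightarrow> 0 \<le> bquad blk B i t"
  unfolding bquad_def by (rule block_form_nonneg) (auto simp: bproj_in)

lemma bquad_eq: "t \<in> V i \<Longrightarrow> bquad blk B i t = t \<bullet> (B i *v t)"
  by (simp add: bquad_def bproj_id)

lemma bnorm_power2: "i < n \<Longrightarrow> (bnorm blk B i t)\<^sup>2 = bquad blk B i t"
  by (simp add: bnorm_eq_sqrt_bquad bquad_nonneg)

lemma block_form_cauchy_schwarz:
  assumes i: "i < n" and u: "u \<in> V i" and v: "v \<in> V i"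
  shows "(u \<bullet> (B i *v v))\<^sup>2 \<le> (u \<bullet> (B i *v u)) * (v \<bullet> (B i *v v))"
proof -
  define a where "a = u \<bullet> (B i *v u)"
  define b where "b = u \<bullet> (B i *v v)"
  define c where "c = v \<bullet> (B i *v v)"
  have expand: "0 \<le> a - 2 * r * b + r\<^sup>2 * c" for r
  proof -
    have w: "u - r *\<^sub>R v \<in> V i" using u v by (intro blockspace_diff blockspace_scaleR)
    have "0 \<le> (u - r *\<^sub>R v) \<bullet> (B i *v (u - r *\<^sub>R v))" by (rule block_form_nonneg[OF i w])
    also have "\<dots> = a - r * b - r * (v \<bullet> (B i *v u)) + r\<^sup>2 * c"
      by (simp add: a_def b_def c_def matrix_vector_mult_diff_distrib matrix_vector_mult_scaleR
          inner_diff_left inner_diff_right power2_eq_square algebra_simps)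
    also have "v \<bullet> (B i *v u) = b" using block_form_sym[OF i u v] by (simp add: b_def)
    finally show ?thesis by (simp add: ac_simps)
  qed
  show ?thesis
  proof (cases "v = 0")
    case True then show ?thesis by simp
  next
    case False
    then have c: "0 < c" using B_pd i v by (auto simp: c_def)
    have "0 \<le> a - 2 * (b / c) * b + (b / c)\<^sup>2 * c" by (rule expand)
    also have "\<dots> = a - b\<^sup>2 / c" using c by (simp add: power2_eq_square field_simps)
    finally have "b\<^sup>2 \<le> a * c" using c by (simp add: field_simps)
    then show ?thesis by (simp add: a_def b_def c_def)
  qed
qed

lemma binv_spec:
  assumes i: "i < n"
  shows "binv blk B i s \<in> V i \<and> bproj blk i (B i *v binv blk B i s) = bproj blk i s"
proof -
  define M where "M u = bproj blk i (B i *v u)" for u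
  have linear_M: "linear M"
    unfolding M_def using linear_compose[OF matrix_vector_mul_linear linear_bproj]
    by (simp add: o_def)
  \<comment> \<open>\<open>M\<close> is injective on block \<open>i\<close>, hence onto it by dimension\<close>
  have inj: "inj_on M (V i)"
  proof (rule inj_onI)
    fix u w assume u: "u \<in> V i" and w: "w \<in> V i" and e: "M u = M w"
    have d: "u - w \<in> V i" using u w by (rule blockspace_diff)
    have "M (u - w) = 0" using e linear_diff[OF linear_M] by simp
    then have "(u - w) \<bullet> (B i *v (u - w)) = 0"
      using inner_bproj[OF d, of "B i *v (u - w)"] by (simp add: M_def inner_commute)
    then have "u - w = 0" using B_pd i d by force
    then show "u = w" by simp
  qed
  have sub: "M ` V i \<subseteq> V i" by (auto simp: M_def bproj_in)
  have "dim (M ` V i) = dim (V i)"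
    using inj
    by (intro dim_image_eq linear_M) (simp add: span_eq_iff[THEN iffD2, OF subspace_blockspace])
  moreover have "subspace (M ` V i)"
    by (rule linear_subspace_image[OF linear_M subspace_blockspace])
  ultimately have eq: "M ` V i = V i"
    using subspace_dim_equal[OF _ subspace_blockspace sub] by simp
  have "bproj blk i s \<in> M ` V i" using eq bproj_in by simp
  then obtain u where u: "u \<in> V i" "M u = bproj blk i s" by (auto simp del: blockspace_def)
  have "\<exists>!u. u \<in> V i \<and> bproj blk i (B i *v u) = bproj blk i s"
  proof (rule ex1I[of _ u])
    show "u \<in> V i \<and> bproj blk i (B i *v u) = bproj blk i s" using u by (simp add: M_def)
    fix w assume "w \<in> V i \<and> bproj blk i (B i *v w) = bproj blk i s"
    then have "w \<in> V i" "M w = M u" using u by (auto simp: M_def)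
    then show "w = u" using inj u(1) by (auto dest: inj_onD)
  qed
  then show ?thesis unfolding binv_def by (rule theI')
qed

lemma inner_le_bdual_mult_bnorm:
  assumes i: "i < n" and t: "t \<in> V i"
  shows "s \<bullet> t \<le> bdual blk B i s * bnorm blk B i t"
proof -
  define u where "u = binv blk B i s"
  have u: "u \<in> V i" "bproj blk i (B i *v u) = bproj blk i s"
    using binv_spec[OF i] by (auto simp: u_def)
  have st: "s \<bullet> t = t \<bullet> (B i *v u)"
  proof -
    have "s \<bullet> t = bproj blk i s \<bullet> t" by (rule inner_bproj[OF t])
    also have "\<dots> = bproj blk i (B i *v u) \<bullet> t" using u by simp
    also have "\<dots> = (B i *v u) \<bullet> t" using inner_bproj[OF t] by simp
    finally show ?thesis by (simp add: inner_commute)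
  qed
  have uu: "u \<bullet> (B i *v u) = bproj blk i s \<bullet> u"
  proof -
    have "u \<bullet> (B i *v u) = bproj blk i (B i *v u) \<bullet> u"
      using inner_bproj[OF u(1), of "B i *v u"] by (simp add: inner_commute)
    then show ?thesis using u by simp
  qed
  have "bdual blk B i s = sqrt (bproj blk i s \<bullet> u)" by (simp add: bdual_def u_def)
  then have bd: "bdual blk B i s = sqrt (u \<bullet> (B i *v u))" by (simp add: uu)
  have bn: "bnorm blk B i t = sqrt (t \<bullet> (B i *v t))" by (simp add: bnorm_eq_sqrt_bquad bquad_eq[OF t])
  have "s \<bullet> t \<le> sqrt ((s \<bullet> t)\<^sup>2)" by simp
  also have "(s \<bullet> t)\<^sup>2 \<le> (t \<bullet> (B i *v t)) * (u \<bullet> (B i *v u))"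
    unfolding st by (rule block_form_cauchy_schwarz[OF i t u(1)])
  then have "sqrt ((s \<bullet> t)\<^sup>2) \<le> sqrt (t \<bullet> (B i *v t)) * sqrt (u \<bullet> (B i *v u))"
    by (metis real_sqrt_le_mono real_sqrt_mult)
  finally show ?thesis by (simp add: bd bn mult.commute)
qed

end

locale smooth_convex = block_forms blk n B
  for blk :: "'N::finite \<Rightarrow> nat" and n B +
  fixes f :: "real^'N \<Rightarrow> real" and g :: "real^'N \<Rightarrow> real^'N" and L :: "nat \<Rightarrow> real"
  assumes L_pos: "\<forall>i<n. L i > 0"
    and f_convex: "convex_on UNIV f"
    and f_grad: "\<forall>x. (f has_derivative (\<lambda>h. g x \<bullet> h)) (at x)"
    and f_lip: "\<forall>i<n. \<forall>x. \<forall>t \<in> blockspace blk i.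
                  bdual blk B i (bproj blk i (g (x + t)) - bproj blk i (g x)) \<le> L i * bnorm blk B i t"
begin

lemma has_real_derivative_along_line:
  "((\<lambda>r. f (x + r *\<^sub>R d)) has_real_derivative (g (x + r *\<^sub>R d) \<bullet> d)) (at r within S)"
proof -
  have l: "((\<lambda>r. x + r *\<^sub>R d) has_derivative (\<lambda>h. h *\<^sub>R d)) (at r within S)"
    by (auto intro!: derivative_eq_intros)
  have "((\<lambda>r. f (x + r *\<^sub>R d)) has_derivative (\<lambda>h. g (x + r *\<^sub>R d) \<bullet> (h *\<^sub>R d))) (at r within S)"
    using has_derivative_compose[OF l f_grad[rule_format]] by simp
  moreover have "(\<lambda>h. g (x + r *\<^sub>R d) \<bullet> (h *\<^sub>R d)) = (*) (g (x + r *\<^sub>R d) \<bullet> d)"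
    by (auto simp: mult.commute)
  ultimately show ?thesis by (simp add: has_field_derivative_def)
qed

lemma block_descent:
  assumes i: "i < n" and t: "t \<in> V i"
  shows "f (x + t) \<le> f x + g x \<bullet> t + L i / 2 * bquad blk B i t"
proof -
  define Q where "Q = bquad blk B i t"
  have Q: "0 \<le> Q" using bquad_nonneg[OF i] by (simp add: Q_def)
  define \<phi> where "\<phi> r = f (x + r *\<^sub>R t) - r * (g x \<bullet> t) - L i / 2 * r\<^sup>2 * Q" for r
  define \<phi>' where "\<phi>' r = g (x + r *\<^sub>R t) \<bullet> t - g x \<bullet> t - L i * r * Q" for r
  have d: "(\<phi> has_real_derivative \<phi>' r) (at r)" for r
  proof -
    have D2: "((\<lambda>r. r * (g x \<bullet> t) + L i / 2 * r\<^sup>2 * Q)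
        has_real_derivative (g x \<bullet> t + L i * r * Q)) (at r)"
      by (auto intro!: derivative_eq_intros simp: field_simps)
    have "((\<lambda>r. f (x + r *\<^sub>R t) - (r * (g x \<bullet> t) + L i / 2 * r\<^sup>2 * Q)) has_real_derivative
           (g (x + r *\<^sub>R t) \<bullet> t - g x \<bullet> t - L i * r * Q)) (at r)"
      using DERIV_diff[OF has_real_derivative_along_line D2] by (simp add: algebra_simps)
    moreover have "\<phi> = (\<lambda>r. f (x + r *\<^sub>R t) - (r * (g x \<bullet> t) + L i / 2 * r\<^sup>2 * Q))"
      by (simp add: fun_eq_iff \<phi>_def)
    ultimately show ?thesis by (simp add: \<phi>'_def)
  qed
  obtain z where z: "0 < z" "z < 1" "\<phi> 1 - \<phi> 0 = (1 - 0) * \<phi>' z"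
    using MVT2[of 0 1 \<phi> \<phi>'] d by auto
  have "\<phi>' z \<le> 0"
  proof -
    have zt: "z *\<^sub>R t \<in> V i" using t by (rule blockspace_scaleR)
    have "g (x + z *\<^sub>R t) \<bullet> t - g x \<bullet> t = (bproj blk i (g (x + z *\<^sub>R t)) - bproj blk i (g x)) \<bullet> t"
      using inner_bproj[OF t] by (simp add: inner_diff_left)
    also have "\<dots>
        \<le> bdual blk B i (bproj blk i (g (x + z *\<^sub>R t)) - bproj blk i (g x)) * bnorm blk B i t"
      by (rule inner_le_bdual_mult_bnorm[OF i t])
    also have "\<dots> \<le> L i * bnorm blk B i (z *\<^sub>R t) * bnorm blk B i t"
      using f_lip i zt bquad_nonneg[OF i, of t]
      by (intro mult_right_mono) (auto simp: bnorm_def bquad_def)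
    also have "bnorm blk B i (z *\<^sub>R t) = z * bnorm blk B i t"
      using z by (simp add: bnorm_eq_sqrt_bquad bquad_scaleR real_sqrt_mult)
    also have "L i * (z * bnorm blk B i t) * bnorm blk B i t = L i * z * Q"
      using bnorm_power2[OF i, of t] by (simp add: Q_def power2_eq_square)
    finally show ?thesis by (simp add: \<phi>'_def)
  qed
  then have "\<phi> 1 \<le> \<phi> 0" using z by simp
  then show ?thesis by (simp add: \<phi>_def Q_def)
qed

lemma gradient_inequality: "f x + g x \<bullet> (y - x) \<le> f y"
proof -
  define d where "d = y - x"
  define \<phi> where "\<phi> r = f (x + r *\<^sub>R d)" for r
  have cv: "convex_on UNIV \<phi>"
  proof (rule convex_onI)
    fix \<tau> a b :: real assume "0 < \<tau>" "\<tau> < 1"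
    have "x + ((1 - \<tau>) *\<^sub>R a + \<tau> *\<^sub>R b) *\<^sub>R d = (1 - \<tau>) *\<^sub>R (x + a *\<^sub>R d) + \<tau> *\<^sub>R (x + b *\<^sub>R d)"
      by (simp add: algebra_simps)
    then show "\<phi> ((1 - \<tau>) *\<^sub>R a + \<tau> *\<^sub>R b) \<le> (1 - \<tau>) * \<phi> a + \<tau> * \<phi> b"
      using convex_onD[OF f_convex, of \<tau> "x + a *\<^sub>R d" "x + b *\<^sub>R d"] \<open>0 < \<tau>\<close> \<open>\<tau> < 1\<close>
      by (simp add: \<phi>_def)
  qed simp
  have "\<phi> = (\<lambda>r. f (x + r *\<^sub>R d))" by (simp add: fun_eq_iff \<phi>_def)
  then have "(\<phi> has_field_derivative (g x \<bullet> d)) (at 0 within UNIV)"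
    using has_real_derivative_along_line[of x d 0 UNIV] by simp
  then have "\<phi> 1 - \<phi> 0 \<ge> (g x \<bullet> d) * (1 - 0)"
    by (intro convex_on_imp_above_tangent[OF cv]) auto
  then show ?thesis by (simp add: \<phi>_def d_def)
qed

end

section \<open>The block subproblem and the UCDC step\<close>

lemma closed_sublevels_attains_min:
  fixes h :: "'a::topological_space \<Rightarrow> ereal"
  assumes cl: "\<And>y. closed {t. t \<in> S \<and> h t \<le> ereal y}"
    and K: "compact K" "K \<subseteq> S" "K \<noteq> {}"
  shows "\<exists>t\<in>K. \<forall>s\<in>K. h t \<le> h s"
proof -
  define v where "v = (INF s\<in>K. h s)"
  define C where "C y = {t. t \<in> S \<and> h t \<le> ereal y}" for y
  define F where "F = C ` {y. v < ereal y}"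
  have "K \<inter> \<Inter>F \<noteq> {}"
  proof (rule compact_imp_fip[OF K(1)])
    show "closed T" if "T \<in> F" for T using that cl by (auto simp: F_def C_def)
  next
    fix F' assume F': "finite F'" "F' \<subseteq> F"
    then obtain Y where Y: "Y \<subseteq> {y. v < ereal y}" "finite Y" "F' = C ` Y"
      unfolding F_def by (meson finite_subset_image)
    show "K \<inter> \<Inter>F' \<noteq> {}"
    proof (cases "Y = {}")
      case True then show ?thesis using Y K by auto
    next
      case False
      define m where "m = Min Y"
      have m: "m \<in> Y" "\<And>y. y \<in> Y \<Longrightarrow> m \<le> y" using False Y by (auto simp: m_def)
      then have "v < ereal m" using Y by auto
      then obtain t where t: "t \<in> K" "h t < ereal m" unfolding v_def by (auto simp: INF_less_iff)
      have "t \<in> C y" if "y \<in> Y" for y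
        using t K m(2)[OF that] by (auto simp: C_def intro: order.trans[OF less_imp_le])
      then have "t \<in> K \<inter> \<Inter>F'" using t Y by auto
      then show ?thesis by blast
    qed
  qed
  then obtain t where t: "t \<in> K" "\<And>y. v < ereal y \<Longrightarrow> h t \<le> ereal y"
    by (auto simp: F_def C_def)
  have "h t \<le> v"
  proof (rule dense_ge)
    fix w assume w: "v < w"
    show "h t \<le> w"
    proof (cases w)
      case (real y) then show ?thesis using t w by auto
    next
      case PInf then show ?thesis by simp
    next
      case MInf then show ?thesis using w by simp
    qed
  qed
  then have "\<forall>s\<in>K. h t \<le> h s" unfolding v_def by (meson INF_lower order.trans)
  then show ?thesis using t by blast
qed

lemma ereal_add_le_iff: "ereal a + (P::ereal) \<le> ereal y \<longleftrightarrow> P \<le> ereal (y - a)"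
  by (cases P) auto

locale composite_problem = smooth_convex blk n B f g L
  for blk :: "'N::finite \<Rightarrow> nat" and n B f g L +
  fixes Psi :: "nat \<Rightarrow> real^'N \<Rightarrow> ereal"
  assumes blocks: "\<forall>j. blk j < n"
    and Psi_proper: "\<forall>i<n. (\<forall>t \<in> blockspace blk i. Psi i t \<noteq> -\<infinity>)
                          \<and> (\<exists>t \<in> blockspace blk i. Psi i t < \<infinity>)"
    and Psi_convex: "\<forall>i<n. convex {(t, y::real). t \<in> blockspace blk i \<and> Psi i t \<le> ereal y}"
    and Psi_closed: "\<forall>i<n. closed {(t, y::real). t \<in> blockspace blk i \<and> Psi i t \<le> ereal y}"
begin

lemma Psi_neq_MInf: "i < n \<Longrightarrow> t \<in> V i \<Longrightarrow> Psi i t \<noteq> -\<infinity>"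
  using Psi_proper by auto

lemma Psi_eq_ereal: "i < n \<Longrightarrow> t \<in> V i \<Longrightarrow> Psi i t < \<infinity> \<Longrightarrow> Psi i t = ereal (real_of_ereal (Psi i t))"
  using Psi_neq_MInf by (cases "Psi i t") auto

lemma Psi_convex_comb:
  assumes i: "i < n" and a: "a \<in> V i" and b: "b \<in> V i" and fa: "Psi i a < \<infinity>" and fb: "Psi i b < \<infinity>"
    and l: "0 \<le> l" "l \<le> 1"
  shows "Psi i ((1 - l) *\<^sub>R a + l *\<^sub>R b)
           \<le> ereal ((1 - l) * real_of_ereal (Psi i a) + l * real_of_ereal (Psi i b))"
proof -
  let ?E = "{(t, y::real). t \<in> blockspace blk i \<and> Psi i t \<le> ereal y}"
  have "(a, real_of_ereal (Psi i a)) \<in> ?E" using a Psi_eq_ereal[OF i a fa] by simp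
  moreover have "(b, real_of_ereal (Psi i b)) \<in> ?E" using b Psi_eq_ereal[OF i b fb] by simp
  ultimately have "(1 - l) *\<^sub>R (a, real_of_ereal (Psi i a)) + l *\<^sub>R (b, real_of_ereal (Psi i b)) \<in> ?E"
    using Psi_convex i l unfolding convex_def by (meson diff_ge_0_iff_ge diff_add_cancel add.commute)
  then show ?thesis by simp
qed

lemma bquad_coercive: "i < n \<Longrightarrow> \<exists>\<beta>>0. \<forall>t\<in>V i. \<beta> * (norm t)\<^sup>2 \<le> bquad blk B i t"
proof -
  assume i: "i < n"
  show ?thesis
  proof (cases "\<exists>u\<in>V i. u \<noteq> 0")
    case False
    then show ?thesis by (intro exI[of _ 1]) (auto simp: bquad_def)
  next
    case True
    then obtain u where u: "u \<in> V i" "u \<noteq> 0" by blast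
    define S where "S = sphere 0 1 \<inter> V i"
    have cS: "compact S"
      unfolding S_def by (intro compact_Int_closed compact_sphere closed_blockspace)
    have "(1 / norm u) *\<^sub>R u \<in> S" using u by (auto simp: S_def blockspace_scaleR)
    then have nS: "S \<noteq> {}" by auto
    obtain t0 where t0: "t0 \<in> S" "\<And>s. s \<in> S \<Longrightarrow> bquad blk B i t0 \<le> bquad blk B i s"
      using continuous_attains_inf[OF cS nS continuous_on_subset[OF continuous_on_bquad]] by blast
    have t0V: "t0 \<in> V i" "t0 \<noteq> 0" using t0(1) by (auto simp: S_def)
    have b0: "0 < bquad blk B i t0"
      using t0V B_pd i by (simp add: bquad_eq)
    show ?thesis
    proof (intro exI[of _ "bquad blk B i t0"] conjI ballI b0)
      fix t assume t: "t \<in> V i"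
      show "bquad blk B i t0 * (norm t)\<^sup>2 \<le> bquad blk B i t"
      proof (cases "t = 0")
        case True then show ?thesis by (simp add: bquad_def)
      next
        case False
        have "(1 / norm t) *\<^sub>R t \<in> S" using t False by (auto simp: S_def blockspace_scaleR)
        then have "bquad blk B i t0 \<le> bquad blk B i ((1 / norm t) *\<^sub>R t)" by (rule t0(2))
        also have "\<dots> = bquad blk B i t / (norm t)\<^sup>2" by (simp add: bquad_scaleR power_divide)
        finally show ?thesis using False by (simp add: field_simps)
      qed
    qed
  qed
qed

definition model where
  "model i c p t = ereal (c \<bullet> t + L i / 2 * bquad blk B i t) + Psi i (p + t)"

lemma closed_model_sublevel:
  assumes i: "i < n" and p: "p \<in> V i"
  shows "closed {t. t \<in> V i \<and> model i c p t \<le> ereal y}"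
proof -
  let ?E = "{(t, y::real). t \<in> blockspace blk i \<and> Psi i t \<le> ereal y}"
  let ?m = "\<lambda>t. (p + t, y - (c \<bullet> t + L i / 2 * bquad blk B i t))"
  have eq: "{t. t \<in> V i \<and> model i c p t \<le> ereal y} = ?m -` ?E"
  proof (rule set_eqI)
    fix t
    have "t \<in> V i \<longleftrightarrow> p + t \<in> V i"
      using p blockspace_add[OF p, of t] blockspace_diff[of "p + t" blk i p] by auto
    then show "t \<in> {t. t \<in> V i \<and> model i c p t \<le> ereal y} \<longleftrightarrow> t \<in> ?m -` ?E"
      by (simp add: model_def ereal_add_le_iff)
  qed
  have "continuous_on UNIV ?m"
    by (intro continuous_intros continuous_on_compose2[OF continuous_on_bquad]) auto
  then show ?thesis unfolding eq using Psi_closed i by (intro closed_vimage) auto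
qed

lemma model_neq_MInf: "i < n \<Longrightarrow> p \<in> V i \<Longrightarrow> t \<in> V i \<Longrightarrow> model i c p t \<noteq> -\<infinity>"
  using Psi_neq_MInf[of i "p + t"] blockspace_add[of p blk i t] by (simp add: model_def)

lemma model_finite:
  assumes i: "i < n" and p: "p \<in> V i" and t: "t \<in> V i" and fin: "model i c p t < \<infinity>"
  shows "Psi i (p + t) < \<infinity>"
    "model i c p t = ereal (c \<bullet> t + L i / 2 * bquad blk B i t + real_of_ereal (Psi i (p + t)))"
proof -
  show f: "Psi i (p + t) < \<infinity>" using fin by (cases "Psi i (p + t)") (auto simp: model_def)
  have "p + t \<in> V i" using p t by (rule blockspace_add)
  then obtain v where "Psi i (p + t) = ereal v" using Psi_eq_ereal[OF i _ f] by blast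
  then show
    "model i c p t = ereal (c \<bullet> t + L i / 2 * bquad blk B i t + real_of_ereal (Psi i (p + t)))"
    by (simp add: model_def)
qed

text \<open>Convexity of \<open>model i c p\<close> along the segment from \<open>0\<close> to \<open>t\<close>: its value at \<open>t / norm t\<close> is at
  least \<open>mu\<close>, and the quadratic term, which grows like \<open>norm t\<close> there, has to be paid for.\<close>

lemma model_sublevel_bounded:
  assumes i: "i < n" and p: "p \<in> V i" and fp: "Psi i p < \<infinity>"
    and \<beta>: "0 < \<beta>" "\<And>t. t \<in> V i \<Longrightarrow> \<beta> * (norm t)\<^sup>2 \<le> bquad blk B i t"
    and mu: "\<And>s. s \<in> V i \<Longrightarrow> norm s \<le> 1 \<Longrightarrow> ereal mu \<le> model i c p s"
    and t: "t \<in> V i" and ht: "model i c p t \<le> model i c p 0"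
  shows "norm t \<le> 1 + 2 * (real_of_ereal (Psi i p) - mu) / (L i * \<beta>)"
proof (rule ccontr)
  let ?h = "model i c p"
  define m0 where "m0 = real_of_ereal (Psi i p)"
  have h0: "?h 0 = ereal m0" using Psi_eq_ereal[OF i p fp] by (simp add: model_def bquad_def m0_def)
  have Li: "0 < L i" using L_pos i by simp
  have "mu \<le> m0" using mu[of 0] h0 by simp
  then have "0 \<le> 2 * (m0 - mu) / (L i * \<beta>)" using Li \<beta> by simp
  moreover define r where "r = norm t"
  assume "\<not> ?thesis"
  ultimately have far: "2 * (m0 - mu) / (L i * \<beta>) < r - 1" and r1: "1 < r"
    by (simp_all add: m0_def r_def)
  define l where "l = 1 / r"
  have l: "0 \<le> l" "l \<le> 1" using r1 by (auto simp: l_def)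
  define q where "q = bquad blk B i t"
  have q: "\<beta> * r\<^sup>2 \<le> q" using \<beta>(2)[OF t] by (simp add: q_def r_def)
  have fin: "?h t < \<infinity>" using ht h0 by auto
  define a where "a = real_of_ereal (Psi i (p + t))"
  have fpt: "Psi i (p + t) < \<infinity>" by (rule model_finite(1)[OF i p t fin])
  have "?h t = ereal (c \<bullet> t + L i / 2 * q + a)"
    using model_finite(2)[OF i p t fin] by (simp add: q_def a_def)
  then have htm: "c \<bullet> t + L i / 2 * q + a \<le> m0" using ht h0 by simp
  have "ereal mu \<le> ?h (l *\<^sub>R t)"
    using t r1 by (intro mu) (auto simp: blockspace_scaleR l_def r_def)
  also have "?h (l *\<^sub>R t)
      = ereal (l * (c \<bullet> t) + L i / 2 * (l\<^sup>2 * q)) + Psi i ((1 - l) *\<^sub>R p + l *\<^sub>R (p + t))"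
    by (simp add: model_def bquad_scaleR q_def algebra_simps)
  also have "\<dots> \<le> ereal (l * (c \<bullet> t) + L i / 2 * (l\<^sup>2 * q)) + ereal ((1 - l) * m0 + l * a)"
    using Psi_convex_comb[OF i p blockspace_add[OF p t] fp fpt l]
    by (intro add_left_mono) (simp add: m0_def a_def)
  finally have "mu \<le> l * (c \<bullet> t) + L i / 2 * (l\<^sup>2 * q) + ((1 - l) * m0 + l * a)" by simp
  also have "\<dots> = (1 - l) * m0 + l * (c \<bullet> t + L i / 2 * q + a) - L i / 2 * (l * (1 - l) * q)"
    by (simp add: algebra_simps power2_eq_square)
  also have "\<dots> \<le> (1 - l) * m0 + l * m0 - L i / 2 * (l * (1 - l) * (\<beta> * r\<^sup>2))"
  proof -
    have "l * (c \<bullet> t + L i / 2 * q + a) \<le> l * m0" using htm l by (intro mult_left_mono) auto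
    moreover have "L i / 2 * (l * (1 - l) * (\<beta> * r\<^sup>2)) \<le> L i / 2 * (l * (1 - l) * q)"
      using q l Li by (intro mult_left_mono) auto
    ultimately show ?thesis by linarith
  qed
  also have "l * (1 - l) * (\<beta> * r\<^sup>2) = \<beta> * (r - 1)"
    using r1 by (simp add: l_def power2_eq_square field_simps)
  finally have "mu \<le> m0 - L i * \<beta> * (r - 1) / 2" by (simp add: algebra_simps)
  then have "L i * \<beta> * (r - 1) \<le> 2 * (m0 - mu)" by (simp add: field_simps)
  then have "r - 1 \<le> 2 * (m0 - mu) / (L i * \<beta>)" using Li \<beta> by (simp add: field_simps)
  then show False using far by simp
qed

lemma model_attains_min:
  assumes i: "i < n" and p: "p \<in> V i" and fp: "Psi i p < \<infinity>"
  shows "\<exists>t\<in>V i. \<forall>s\<in>V i. model i c p t \<le> model i c p s"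
proof -
  let ?h = "model i c p"
  have h0: "?h 0 = ereal (real_of_ereal (Psi i p))"
    using Psi_eq_ereal[OF i p fp] by (simp add: model_def bquad_def)
  have cl: "\<And>y. closed {t. t \<in> V i \<and> ?h t \<le> ereal y}" using closed_model_sublevel[OF i p] by blast
  \<comment> \<open>a minimum over the unit ball bounds the sublevel set of \<open>0\<close>, then minimize over that bound\<close>
  define K1 where "K1 = cball 0 1 \<inter> V i"
  have K1: "compact K1" "K1 \<subseteq> V i" "0 \<in> K1"
    unfolding K1_def by (auto intro: compact_Int_closed closed_blockspace)
  obtain t1 where t1: "t1 \<in> K1" "\<And>s. s \<in> K1 \<Longrightarrow> ?h t1 \<le> ?h s"
    using closed_sublevels_attains_min[OF cl K1(1,2)] K1(3) by blast
  have "?h t1 \<le> ?h 0" using t1(2)[OF K1(3)] .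
  moreover have "?h t1 \<noteq> -\<infinity>" using model_neq_MInf[OF i p] t1(1) K1(2) by auto
  ultimately obtain mu where mu: "?h t1 = ereal mu" using h0 by (cases "?h t1") auto
  obtain \<beta> where \<beta>: "\<beta> > 0" "\<And>t. t \<in> V i \<Longrightarrow> \<beta> * (norm t)\<^sup>2 \<le> bquad blk B i t"
    using bquad_coercive[OF i] by blast
  define R where "R = 1 + 2 * (real_of_ereal (Psi i p) - mu) / (L i * \<beta>)"
  have bound: "norm t \<le> R" if "t \<in> V i" "?h t \<le> ?h 0" for t
    unfolding R_def using t1(2) mu
    by (intro model_sublevel_bounded[OF i p fp \<beta> _ that]) (auto simp: K1_def)
  define K2 where "K2 = cball 0 R \<inter> V i"
  have K2: "compact K2" "K2 \<subseteq> V i" "0 \<in> K2"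
    unfolding K2_def using bound[of 0] by (auto intro: compact_Int_closed closed_blockspace)
  obtain t2 where t2: "t2 \<in> K2" "\<And>s. s \<in> K2 \<Longrightarrow> ?h t2 \<le> ?h s"
    using closed_sublevels_attains_min[OF cl K2(1,2)] K2(3) by blast
  have "?h t2 \<le> ?h s" if s: "s \<in> V i" for s
  proof (cases "norm s \<le> R")
    case True then show ?thesis using t2 s by (auto simp: K2_def)
  next
    case False
    then have "?h 0 < ?h s" using bound s by fastforce
    then show ?thesis using t2(2)[OF K2(3)] by auto
  qed
  then show ?thesis using t2(1) K2(2) by blast
qed

text \<open>Real-valued versions of \<open>\<Psi>\<^sub>j\<close> and \<open>F\<close>; they are meaningful only on \<open>in_dom\<close>, since
  \<open>real_of_ereal \<infinity> = 0\<close>.\<close>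

definition Psi_at where "Psi_at x j = real_of_ereal (Psi j (bproj blk j x))"
definition objective_real where "objective_real x = f x + (\<Sum>j<n. Psi_at x j)"
definition in_dom where "in_dom x \<longleftrightarrow> (\<forall>j<n. Psi j (bproj blk j x) < \<infinity>)"
abbreviation objective where "objective \<equiv> Fobj f blk Psi n"
abbreviation T where "T i x \<equiv> Tstep blk B L g Psi i x"
definition model_min where
  "model_min i x = real_of_ereal (model i (bproj blk i (g x)) (bproj blk i x) (T i x))"

lemma Psi_tot_eq_ereal:
  assumes "in_dom x"
  shows "Psi_tot blk Psi n x = ereal (\<Sum>j<n. Psi_at x j)"
proof -
  have "Psi_tot blk Psi n x = (\<Sum>j<n. ereal (Psi_at x j))"
    unfolding Psi_tot_def Psi_at_def
    by (intro sum.cong refl Psi_eq_ereal bproj_in) (use assms in \<open>auto simp: in_dom_def\<close>)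
  then show ?thesis by simp
qed

lemma objective_eq_ereal: "in_dom x \<Longrightarrow> objective x = ereal (objective_real x)"
  by (simp add: Fobj_def Psi_tot_eq_ereal objective_real_def)

lemma in_dom_of_objective_less_PInf: "objective x < \<infinity> \<Longrightarrow> in_dom x"
proof (rule ccontr)
  assume a: "objective x < \<infinity>" "\<not> in_dom x"
  then obtain j where j: "j < n" "\<not> Psi j (bproj blk j x) < \<infinity>" by (auto simp: in_dom_def)
  then have "Psi_tot blk Psi n x = \<infinity>" unfolding Psi_tot_def by (subst sum_Pinfty) auto
  then show False using a by (simp add: Fobj_def)
qed

lemma Tstep_objective_eq_model:
  assumes i: "i < n"
  shows "(\<lambda>t. ereal (bproj blk i (g x) \<bullet> t + L i / 2 * (bnorm blk B i t)\<^sup>2) + Psi i (bproj blk i x + t))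
       = model i (bproj blk i (g x)) (bproj blk i x)"
  using bnorm_power2[OF i] by (simp add: model_def fun_eq_iff)

lemma Tstep_minimizes:
  assumes x: "in_dom x" and i: "i < n"
  shows "T i x \<in> V i" "\<And>s. s \<in> V i \<Longrightarrow> model i (bproj blk i (g x)) (bproj blk i x) (T i x)
                                         \<le> model i (bproj blk i (g x)) (bproj blk i x) s"
proof -
  let ?h = "model i (bproj blk i (g x)) (bproj blk i x)"
  have ex: "\<exists>t. t \<in> V i \<and> (\<forall>s\<in>V i. ?h t \<le> ?h s)"
    using model_attains_min[OF i bproj_in, of x "bproj blk i (g x)"] x i by (auto simp: in_dom_def)
  have "T i x = (SOME t. t \<in> V i \<and> (\<forall>s\<in>V i. ?h t \<le> ?h s))"
    unfolding Tstep_def Let_def Tstep_objective_eq_model[OF i] ..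
  then have "T i x \<in> V i \<and> (\<forall>s\<in>V i. ?h (T i x) \<le> ?h s)"
    using someI_ex[OF ex] by simp
  then show "T i x \<in> V i" "\<And>s. s \<in> V i \<Longrightarrow> ?h (T i x) \<le> ?h s" by auto
qed

lemma model_at_0:
  "in_dom x \<Longrightarrow> i < n \<Longrightarrow> model i (bproj blk i (g x)) (bproj blk i x) 0 = ereal (Psi_at x i)"
  using Psi_eq_ereal[OF _ bproj_in] by (simp add: model_def bquad_def in_dom_def Psi_at_def)

lemma model_at_Tstep:
  assumes x: "in_dom x" and i: "i < n"
  shows "model i (bproj blk i (g x)) (bproj blk i x) (T i x) = ereal (model_min i x)"
    "model_min i x \<le> Psi_at x i"
    "Psi i (bproj blk i x + T i x) < \<infinity>"
    "model_min i x = bproj blk i (g x) \<bullet> T i x + L i / 2 * bquad blk B i (T i x)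
              + real_of_ereal (Psi i (bproj blk i x + T i x))"
proof -
  let ?h = "model i (bproj blk i (g x)) (bproj blk i x)"
  have le: "?h (T i x) \<le> ereal (Psi_at x i)"
    using Tstep_minimizes(2)[OF x i, of 0] model_at_0[OF x i] by simp
  then have fin: "?h (T i x) < \<infinity>" by auto
  note hr = model_finite[OF i bproj_in Tstep_minimizes(1)[OF x i] fin]
  show "?h (T i x) = ereal (model_min i x)" using hr(2) by (simp add: model_min_def)
  then show "model_min i x \<le> Psi_at x i" using le by simp
  show "Psi i (bproj blk i x + T i x) < \<infinity>" by (rule hr(1))
  show "model_min i x = bproj blk i (g x) \<bullet> T i x + L i / 2 * bquad blk B i (T i x)
              + real_of_ereal (Psi i (bproj blk i x + T i x))" using hr(2) by (simp add: model_min_def)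
qed

lemma bproj_add_block:
  assumes t: "t \<in> V i"
  shows "bproj blk j (x + t) = (if j = i then bproj blk i x + t else bproj blk j x)"
  using t by (auto simp: bproj_add bproj_id bproj_other)

lemma Tstep_decrease:
  assumes x: "in_dom x" and i: "i < n"
  shows "in_dom (x + T i x)"
    "objective_real (x + T i x) \<le> objective_real x - Psi_at x i + model_min i x"
proof -
  define t where "t = T i x"
  have t: "t \<in> V i" using Tstep_minimizes(1)[OF x i] by (simp add: t_def)
  note bp = bproj_add_block[OF t]
  have fin: "Psi i (bproj blk i x + t) < \<infinity>" using model_at_Tstep(3)[OF x i] by (simp add: t_def)
  show "in_dom (x + T i x)" using x fin bp unfolding in_dom_def t_def by auto
  have "(\<Sum>j<n. Psi_at (x + t) j)
      = (\<Sum>j<n. Psi_at x j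
          + (if j = i then real_of_ereal (Psi i (bproj blk i x + t)) - Psi_at x i else 0))"
    by (intro sum.cong) (auto simp: Psi_at_def bp)
  then have "(\<Sum>j<n. Psi_at (x + t) j)
      = (\<Sum>j<n. Psi_at x j) - Psi_at x i + real_of_ereal (Psi i (bproj blk i x + t))"
    using i by (simp add: sum.distrib)
  moreover have "f (x + t) \<le> f x + bproj blk i (g x) \<bullet> t + L i / 2 * bquad blk B i t"
    using block_descent[OF i t, of x] inner_bproj[OF t, of "g x"] by simp
  ultimately show "objective_real (x + T i x) \<le> objective_real x - Psi_at x i + model_min i x"
    using model_at_Tstep(4)[OF x i] by (simp add: objective_real_def t_def)
qed

lemma normL_power2: "(normL blk B L n d)\<^sup>2 = (\<Sum>i<n. L i * bquad blk B i d)"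
proof -
  have "0 \<le> (\<Sum>i<n. L i * (bnorm blk B i d)\<^sup>2)"
    using L_pos by (intro sum_nonneg) (auto intro: less_imp_le)
  then have "(normL blk B L n d)\<^sup>2 = (\<Sum>i<n. L i * (bnorm blk B i d)\<^sup>2)" by (simp add: normL_def)
  also have "\<dots> = (\<Sum>i<n. L i * bquad blk B i d)" by (intro sum.cong) (auto simp: bnorm_power2)
  finally show ?thesis .
qed

text \<open>\<open>T i x\<close> is compared with moving block \<open>i\<close> a fraction \<open>a\<close> of the way towards \<open>xs\<close>. Summed over
  the blocks, the \<open>Psi\<close> terms form a convex combination, the linear terms are bounded by the
  gradient inequality, and the quadratic terms add up to \<open>normL\<close>.\<close>

lemma model_min_le:
  assumes x: "in_dom x" and xs: "in_dom xs" and a: "0 \<le> a" "a \<le> 1" and i: "i < n"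
  shows "model_min i x \<le> a * (g x \<bullet> bproj blk i (xs - x)) + L i / 2 * (a\<^sup>2 * bquad blk B i (xs - x))
                  + ((1 - a) * Psi_at x i + a * Psi_at xs i)"
proof -
  define d where "d = xs - x"
  define t_i where "t_i = a *\<^sub>R bproj blk i d"
  have t_i: "t_i \<in> V i" by (simp add: t_i_def blockspace_scaleR bproj_in)
  let ?h = "model i (bproj blk i (g x)) (bproj blk i x)"
  have "ereal (model_min i x) \<le> ?h t_i"
    using Tstep_minimizes(2)[OF x i t_i] model_at_Tstep(1)[OF x i] by simp
  also have "?h t_i = ereal (a * (g x \<bullet> bproj blk i d) + L i / 2 * (a\<^sup>2 * bquad blk B i d))
                     + Psi i ((1 - a) *\<^sub>R bproj blk i x + a *\<^sub>R bproj blk i xs)"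
  proof -
    have "bproj blk i (g x) \<bullet> t_i = a * (g x \<bullet> bproj blk i d)"
      using inner_bproj[OF bproj_in, of "g x" blk i d] by (simp add: t_i_def)
    moreover have "bquad blk B i t_i = a\<^sup>2 * bquad blk B i d"
    proof -
      have "bquad blk B i t_i = a\<^sup>2 * bquad blk B i (bproj blk i d)"
        by (simp add: t_i_def bquad_scaleR)
      also have "bquad blk B i (bproj blk i d) = bquad blk B i d" by (simp add: bquad_def)
      finally show ?thesis .
    qed
    moreover have "bproj blk i x + t_i = (1 - a) *\<^sub>R bproj blk i x + a *\<^sub>R bproj blk i xs"
      by (simp add: t_i_def d_def bproj_diff algebra_simps)
    ultimately show ?thesis by (simp add: model_def)
  qed
  also have "\<dots> \<le> ereal (a * (g x \<bullet> bproj blk i d) + L i / 2 * (a\<^sup>2 * bquad blk B i d))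
                   + ereal ((1 - a) * Psi_at x i + a * Psi_at xs i)"
    using Psi_convex_comb[OF i bproj_in bproj_in, of x xs a] x xs i a
    by (intro add_left_mono) (auto simp: in_dom_def Psi_at_def)
  finally show ?thesis by (simp add: d_def)
qed

lemma sum_objective_real_step_le:
  assumes x: "in_dom x" and xs: "in_dom xs" and a: "0 \<le> a" "a \<le> 1"
  shows "(\<Sum>i<n. objective_real (x + T i x))
           \<le> real n * objective_real x - a * (objective_real x - objective_real xs)
             + a\<^sup>2 * (normL blk B L n (x - xs))\<^sup>2 / 2"
proof -
  define d where "d = xs - x"
  have lin: "(\<Sum>i<n. a * (g x \<bullet> bproj blk i d)) = a * (g x \<bullet> d)"
    by (simp add: sum_distrib_left[symmetric] inner_sum_right[symmetric] sum_bproj[OF blocks])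
  have quad: "(\<Sum>i<n. L i * (a\<^sup>2 * bquad blk B i d) / 2) = a\<^sup>2 * (normL blk B L n (x - xs))\<^sup>2 / 2"
    using bquad_minus[of blk B _ "x - xs"]
    by (simp add: normL_power2 d_def sum_distrib_left sum_divide_distrib algebra_simps)
  have "(\<Sum>i<n. objective_real (x + T i x))
      \<le> (\<Sum>i<n. objective_real x - Psi_at x i + (a * (g x \<bullet> bproj blk i d)
             + L i / 2 * (a\<^sup>2 * bquad blk B i d) + ((1 - a) * Psi_at x i + a * Psi_at xs i)))"
  proof (intro sum_mono)
    fix i assume "i \<in> {..<n}"
    then have i: "i < n" by simp
    show "objective_real (x + T i x) \<le> objective_real x - Psi_at x i + (a * (g x \<bullet> bproj blk i d)
             + L i / 2 * (a\<^sup>2 * bquad blk B i d) + ((1 - a) * Psi_at x i + a * Psi_at xs i))"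
      using Tstep_decrease(2)[OF x i] model_min_le[OF x xs a i] unfolding d_def by linarith
  qed
  also have "\<dots> = real n * objective_real x - a * (\<Sum>i<n. Psi_at x i - Psi_at xs i) + a * (g x \<bullet> d)
                 + a\<^sup>2 * (normL blk B L n (x - xs))\<^sup>2 / 2"
    by (simp add: sum.distrib sum_subtractf sum_distrib_left lin quad algebra_simps)
  also have "\<dots> \<le> real n * objective_real x - a * (\<Sum>i<n. Psi_at x i - Psi_at xs i) + a * (f xs - f x)
                 + a\<^sup>2 * (normL blk B L n (x - xs))\<^sup>2 / 2"
    using gradient_inequality[of x xs] a by (simp add: d_def mult_left_mono)
  also have "\<dots> = real n * objective_real x - a * (objective_real x - objective_real xs)
                 + a\<^sup>2 * (normL blk B L n (x - xs))\<^sup>2 / 2"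
    by (simp add: objective_real_def sum_subtractf algebra_simps)
  finally show ?thesis .
qed

lemma minimizer_in_dom:
  assumes x0: "objective x0 < \<infinity>" and xs: "objective xs = Inf (range objective)"
  shows "in_dom xs" and "Inf (range objective) = ereal (objective_real xs)"
    and "\<And>y. in_dom y \<Longrightarrow> objective_real xs \<le> objective_real y"
proof -
  have le: "objective xs \<le> objective y" for y unfolding xs by (rule Inf_lower) simp
  show "in_dom xs" using le[of x0] x0 by (intro in_dom_of_objective_less_PInf) (rule order.strict_trans1)
  then show "Inf (range objective) = ereal (objective_real xs)" using xs objective_eq_ereal by simp
  show "objective_real xs \<le> objective_real y" if "in_dom y" for y
    using le[of y] objective_eq_ereal[OF that] objective_eq_ereal[OF \<open>in_dom xs\<close>] by simp
qed

lemma n_pos: "0 < n"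
  using blocks by (metis gr_zeroI not_less0)

lemma expected_descent_ucdc:
  assumes x0: "in_dom x0" and xs: "in_dom xs"
    and opt: "\<And>y. in_dom y \<Longrightarrow> objective_real xs \<le> objective_real y"
    and R: "\<And>y. in_dom y \<Longrightarrow> objective_real y \<le> objective_real x0 \<Longrightarrow> normL blk B L n (y - xs) \<le> R"
  shows "expected_descent n (\<lambda>i x. x + T i x) (\<lambda>x. in_dom x \<and> objective_real x \<le> objective_real x0)
           (\<lambda>x. objective_real x - objective_real xs) x0 (R\<^sup>2)"
proof
  fix x i assume x: "in_dom x \<and> objective_real x \<le> objective_real x0" and i: "i < n"
  have "objective_real (x + T i x) \<le> objective_real x"
    using Tstep_decrease(2)[OF _ i] model_at_Tstep(2)[OF _ i] x by fastforce
  then show "in_dom (x + T i x) \<and> objective_real (x + T i x) \<le> objective_real x0"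
    and "objective_real (x + T i x) - objective_real xs \<le> objective_real x - objective_real xs"
    using Tstep_decrease(1)[OF _ i] x by auto
next
  fix x and a :: real
  assume x: "in_dom x \<and> objective_real x \<le> objective_real x0" and a: "0 \<le> a" "a \<le> 1"
  have "normL blk B L n (x - xs) \<le> R" using x R by blast
  then have "(normL blk B L n (x - xs))\<^sup>2 \<le> R\<^sup>2"
    using L_pos by (intro power_mono) (auto simp: normL_def intro!: sum_nonneg mult_nonneg_nonneg)
  then have "a\<^sup>2 * (normL blk B L n (x - xs))\<^sup>2 / 2 \<le> a\<^sup>2 * R\<^sup>2 / 2"
    by (simp add: divide_right_mono mult_left_mono)
  then show "(\<Sum>i<n. objective_real (x + T i x) - objective_real xs)
      \<le> real n * (objective_real x - objective_real xs) - a * (objective_real x - objective_real xs)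
         + a\<^sup>2 * R\<^sup>2 / 2"
    using sum_objective_real_step_le[of x xs a] x xs a by (simp add: sum_subtractf algebra_simps)
qed (use n_pos x0 opt in auto)

end

lemma ucdc_eq_iterate_along:
  "ucdc blk B L g Psi x0 om k = iterate_along (\<lambda>i x. x + Tstep blk B L g Psi i x) x0 om k"
  by (induction k) (simp_all add: Let_def)

theorem theorem4:
  fixes f :: "real^'N::finite \<Rightarrow> real" and g :: "real^'N \<Rightarrow> real^'N"
    and blk :: "'N \<Rightarrow> nat" and n :: nat and B :: "nat \<Rightarrow> real^'N^'N"
    and L :: "nat \<Rightarrow> real" and Psi :: "nat \<Rightarrow> real^'N \<Rightarrow> ereal"
    and x0 :: "real^'N" and rho eps :: real and k :: nat
    and F :: "real^'N \<Rightarrow> ereal" and Fstar :: ereal and RL D :: real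
  defines "F \<equiv> Fobj f blk Psi n"
  defines "Fstar \<equiv> Inf (range F)"
  defines "RL \<equiv> Sup {normL blk B L n (y - xs) | y xs. F y \<le> F x0 \<and> F xs = Fstar}"
  defines "D \<equiv> real_of_ereal (F x0 - Fstar)"
  assumes blocks: "\<forall>j. blk j < n"
    and B_sym: "\<forall>i<n. \<forall>j l. blk j = i \<and> blk l = i \<longrightarrow> B i $ j $ l = B i $ l $ j"
    and B_pd: "\<forall>i<n. \<forall>t \<in> blockspace blk i. t \<noteq> 0 \<longrightarrow> t \<bullet> (B i *v t) > 0"
    and L_pos: "\<forall>i<n. L i > 0"
    and f_convex: "convex_on UNIV f"
    and f_grad: "\<forall>x. (f has_derivative (\<lambda>h. g x \<bullet> h)) (at x)"
    and f_lip: "\<forall>i<n. \<forall>x. \<forall>t \<in> blockspace blk i.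
                  bdual blk B i (bproj blk i (g (x + t)) - bproj blk i (g x)) \<le> L i * bnorm blk B i t"
    and Psi_proper: "\<forall>i<n. (\<forall>t \<in> blockspace blk i. Psi i t \<noteq> -\<infinity>)
                          \<and> (\<exists>t \<in> blockspace blk i. Psi i t < \<infinity>)"
    and Psi_convex: "\<forall>i<n. convex {(t, y::real). t \<in> blockspace blk i \<and> Psi i t \<le> ereal y}"
    and Psi_closed: "\<forall>i<n. closed {(t, y::real). t \<in> blockspace blk i \<and> Psi i t \<le> ereal y}"
    and has_min: "\<exists>xs. F xs = Fstar"
    and x0_dom: "F x0 < \<infinity>"
    and RL_bdd: "bdd_above {normL blk B L n (y - xs) | y xs. F y \<le> F x0 \<and> F xs = Fstar}"
    and rho: "0 < rho" "rho < 1"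
    and eps: "0 < eps"
    and choice:
      "(eps < D \<and>
          real k \<ge> 2 * real n * max (RL\<^sup>2) D / eps * (1 + ln (1 / rho)) + 2
                    - 2 * real n * max (RL\<^sup>2) D / D)
     \<or> (eps < min (RL\<^sup>2) D \<and>
          real k \<ge> 2 * real n * RL\<^sup>2 / eps * ln (D / (eps * rho)))"
  shows "measure_pmf.prob (Pi_pmf {..<k} 0 (\<lambda>_. pmf_of_set {..<n}))
           {om. F (ucdc blk B L g Psi x0 om k) \<le> Fstar + ereal eps} \<ge> 1 - rho"
proof -
  interpret composite_problem blk n B f g L Psi
    by unfold_locales (fact B_sym, fact B_pd, fact L_pos, fact f_convex, fact f_grad, fact f_lip,
        fact blocks, fact Psi_proper, fact Psi_convex, fact Psi_closed)
  have F: "F = objective" by (simp add: F_def)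
  obtain xs where xs: "F xs = Fstar" using has_min by blast
  have x0: "in_dom x0" using x0_dom F in_dom_of_objective_less_PInf by simp
  note xs_min = minimizer_in_dom[OF x0_dom[unfolded F] xs[unfolded Fstar_def F]]
  have Fstar: "Fstar = ereal (objective_real xs)" using xs_min(2) by (simp add: Fstar_def F)
  have R: "normL blk B L n (y - xs) \<le> RL" if "in_dom y" "objective_real y \<le> objective_real x0" for y
    unfolding RL_def using that xs objective_eq_ereal x0 F by (intro cSup_upper[OF _ RL_bdd]) force
  interpret E: expected_descent n "\<lambda>i x. x + T i x"
      "\<lambda>x. in_dom x \<and> objective_real x \<le> objective_real x0"
      "\<lambda>x. objective_real x - objective_real xs" x0 "RL\<^sup>2"
    by (rule expected_descent_ucdc[OF x0 xs_min(1,3) R])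
  have "D = objective_real x0 - objective_real xs"
    by (simp add: D_def F objective_eq_ereal[OF x0] Fstar)
  then have "1 - rho \<le> measure_pmf.prob (Pi_pmf {..<k} 0 (\<lambda>_. pmf_of_set {..<n}))
      {om \<in> index_seqs n k. objective_real (E.iterate om k) - objective_real xs \<le> eps}"
    using E.prob_le_eps_ge_one_minus[OF rho eps] choice by simp
  also have "\<dots> \<le> measure_pmf.prob (Pi_pmf {..<k} 0 (\<lambda>_. pmf_of_set {..<n}))
      {om. F (ucdc blk B L g Psi x0 om k) \<le> Fstar + ereal eps}"
    using E.P_iterate
    by (intro measure_pmf.finite_measure_mono)
       (auto simp: ucdc_eq_iterate_along F Fstar objective_eq_ereal algebra_simps)
  finally show ?thesis .
qed

end
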